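(* Let $G=\langle g\rangle$ be cyclic of prime order $p$ and $B=\mathcal{O}G$. Then: (1) Every $I\in\operatorname{PI}(B)$ has homogeneous sign, i.e. either $I(\chi)\in\operatorname{Irr}(B)$ for all $\chi\in\operatorname{Irr}(B)$, or $-I(\chi)\in\operatorname{Irr}(B)$ for all $\chi\in\operatorname{Irr}(B)$. (2) Every $I\in\operatorname{PI}(B)$ with all-positive sign (i.e. $I(\chi)\in\operatorname{Irr}(B)$ for all $\chi\in\operatorname{Irr}(B)$) is a composition of isometries of the forms $I_\lambda$ ($\lambda\in\operatorname{Irr}(B)$) and $I_\sigma$ ($\sigma\in\operatorname{Aut}(G)$). (3) $\operatorname{PI}(B)\cong (G\rtimes\operatorname{Aut}(G))\times\langle -\mathrm{id}\rangle$, where $\langle-\mathrm{id}\rangle$ is cyclic of order 2 and $\operatorname{Aut}(G)$ acts naturally on $G$.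
   Context: Let $p$ be a prime, $\zeta$ a primitive $p$-th root of unity, $K=\mathbb{Q}_p(\zeta)$, $\mathcal{O}=\mathbb{Z}_p[\zeta]$. Let $G=\langle g\rangle$ be cyclic of order $p$; $B=\mathcal{O}G$ is its unique block and $\operatorname{Irr}(B)=\{\chi_0,\dots,\chi_{p-1}\}$ with $\chi_a(g^b)=\zeta^{ab}$. $R_K(B)$ is the free abelian group on $\operatorname{Irr}(B)$ with inner product $\langle\alpha,\beta\rangle=\frac1p\sum_{x\in G}\alpha(x)\beta(x^{-1})$. For a linear map $I:R_K(B)\to R_K(B)$ put $\mu_I(x,y)=\sum_{\chi\in\operatorname{Irr}(B)}I(\chi)(x)\chi(y)$, a generalized character of $G\times G$. A generalized character $\mu$ of $G\times G$ is perfect if (i) $\mu(x,y)/|C_G(x)|\in\mathcal{O}$ and $\mu(x,y)/|C_G(y)|\in\mathcal{O}$ for all $x,y$ (here $|C_G(x)|=p$); (ii) whenever $\mu(x,y)\ne0$, $x$ is $p$-regular (i.e. $x=1$) iff $y$ is $p$-regular. A perfect isometry of $R_K(B)$ is a bijective linear isometry $I$ of $R_K(B)$ with $\mu_I$ perfect; $\operatorname{PI}(B)$ is the group of these under composition. For $\lambda\in\operatorname{Irr}(B)$, $I_\lambda$ is the linear map with $I_\lambda(\chi)=\lambda\chi$ (pointwise product) for $\chi\in\operatorname{Irr}(B)$. For $\sigma\in\operatorname{Aut}(G)$, $I_\sigma$ is the linear map with $I_\sigma(\chi)=\chi^\sigma$, where $\chi^\sigma(h)=\chi(h^{\sigma^{-1}})$.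 *)

theory Defs
  imports Complex_Main "HOL-Computational_Algebra.Primes" "HOL-Algebra.Group"
begin

text \<open>Model: G = <g> of order p is represented by exponents {..<p} (b stands for g^b).
 Class functions on G are functions nat => complex vanishing outside {..<p}.
 Q(zeta) is embedded in the complex numbers, zeta = exp(2 pi i / p).\<close>

definition zeta :: "nat \<Rightarrow> complex" where
  "zeta p = cis (2 * pi / real p)"

definition chi :: "nat \<Rightarrow> nat \<Rightarrow> nat \<Rightarrow> complex" where
  "chi p a x = (if x < p then zeta p ^ (a * x) else 0)"

definition Irr :: "nat \<Rightarrow> (nat \<Rightarrow> complex) set" where
  "Irr p = chi p ` {..<p}"

text \<open>Elements of R_K(B) are given by integer coefficient vectors w.r.t. chi_0..chi_{p-1}.\<close>
definition Zsupp :: "nat \<Rightarrow> (nat \<Rightarrow> int) set" where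
  "Zsupp p = {c. \<forall>a. p \<le> a \<longrightarrow> c a = 0}"

definition vchar :: "nat \<Rightarrow> (nat \<Rightarrow> int) \<Rightarrow> nat \<Rightarrow> complex" where
  "vchar p c = (\<lambda>x. \<Sum>a<p. of_int (c a) * chi p a x)"

text \<open>inner product <alpha,beta> = 1/p sum_x alpha(x) beta(x^-1)\<close>
definition ip :: "nat \<Rightarrow> (nat \<Rightarrow> complex) \<Rightarrow> (nat \<Rightarrow> complex) \<Rightarrow> complex" where
  "ip p \<alpha> \<beta> = (1 / of_nat p) * (\<Sum>x<p. \<alpha> x * \<beta> ((p - x) mod p))"

text \<open>A Z-linear map I of R_K(B) is given by its integer matrix M:
  I(chi_a) = sum_b M a b chi_b.  Entries outside {..<p} x {..<p} are 0.\<close>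
definition mats :: "nat \<Rightarrow> (nat \<Rightarrow> nat \<Rightarrow> int) set" where
  "mats p = {M. \<forall>a b. (p \<le> a \<or> p \<le> b) \<longrightarrow> M a b = 0}"

definition lmap :: "nat \<Rightarrow> (nat \<Rightarrow> nat \<Rightarrow> int) \<Rightarrow> (nat \<Rightarrow> int) \<Rightarrow> nat \<Rightarrow> int" where
  "lmap p M c = (\<lambda>b. if b < p then (\<Sum>a<p. c a * M a b) else 0)"

definition img :: "nat \<Rightarrow> (nat \<Rightarrow> nat \<Rightarrow> int) \<Rightarrow> nat \<Rightarrow> nat \<Rightarrow> complex" where
  "img p M a = vchar p (M a)"

definition mu :: "nat \<Rightarrow> (nat \<Rightarrow> nat \<Rightarrow> int) \<Rightarrow> nat \<Rightarrow> nat \<Rightarrow> complex" where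
  "mu p M x y = (\<Sum>a<p. img p M a x * chi p a y)"

definition Zzeta :: "nat \<Rightarrow> complex set" where
  "Zzeta p = {z. \<exists>c :: nat \<Rightarrow> int. z = (\<Sum>k<p. of_int (c k) * zeta p ^ k)}"

text \<open>membership in O intersected with Q(zeta) (= Z_(p)[zeta])\<close>
definition in_O :: "nat \<Rightarrow> complex \<Rightarrow> bool" where
  "in_O p z \<longleftrightarrow> (\<exists>s :: int. coprime s (int p) \<and> of_int s * z \<in> Zzeta p)"

text \<open>perfectness; note |C_G(x)| = |C_G(y)| = p since G is abelian\<close>
definition perfect :: "nat \<Rightarrow> (nat \<Rightarrow> nat \<Rightarrow> int) \<Rightarrow> bool" where
  "perfect p M \<longleftrightarrow>
     (\<forall>x<p. \<forall>y<p. in_O p (mu p M x y / of_nat p) \<and> in_O p (mu p M x y / of_nat p)) \<and>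
     (\<forall>x<p. \<forall>y<p. mu p M x y \<noteq> 0 \<longrightarrow> (x = 0 \<longleftrightarrow> y = 0))"

definition isometry :: "nat \<Rightarrow> (nat \<Rightarrow> nat \<Rightarrow> int) \<Rightarrow> bool" where
  "isometry p M \<longleftrightarrow> (\<forall>c\<in>Zsupp p. \<forall>d\<in>Zsupp p.
      ip p (vchar p (lmap p M c)) (vchar p (lmap p M d)) = ip p (vchar p c) (vchar p d))"

definition PI :: "nat \<Rightarrow> (nat \<Rightarrow> nat \<Rightarrow> int) set" where
  "PI p = {M \<in> mats p. bij_betw (lmap p M) (Zsupp p) (Zsupp p) \<and> isometry p M \<and> perfect p M}"

text \<open>matrix of the composition I o J\<close>
definition mcomp :: "nat \<Rightarrow> (nat \<Rightarrow> nat \<Rightarrow> int) \<Rightarrow> (nat \<Rightarrow> nat \<Rightarrow> int) \<Rightarrow> nat \<Rightarrow> nat \<Rightarrow> int" where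
  "mcomp p I J = (\<lambda>a c. if a < p \<and> c < p then (\<Sum>b<p. J a b * I b c) else 0)"

definition idmat :: "nat \<Rightarrow> nat \<Rightarrow> nat \<Rightarrow> int" where
  "idmat p = (\<lambda>a b. if a < p \<and> b < p \<and> a = b then 1 else 0)"

definition PI_group :: "nat \<Rightarrow> (nat \<Rightarrow> nat \<Rightarrow> int) monoid" where
  "PI_group p = \<lparr>carrier = PI p, mult = mcomp p, one = idmat p\<rparr>"

definition mat_of :: "nat \<Rightarrow> (nat \<Rightarrow> nat \<Rightarrow> complex) \<Rightarrow> nat \<Rightarrow> nat \<Rightarrow> int" where
  "mat_of p f = (THE M. M \<in> mats p \<and> (\<forall>a<p. vchar p (M a) = f a))"

definition I_lam :: "nat \<Rightarrow> (nat \<Rightarrow> complex) \<Rightarrow> nat \<Rightarrow> nat \<Rightarrow> int" where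
  "I_lam p lam = mat_of p (\<lambda>a x. lam x * chi p a x)"

text \<open>Aut(G), automorphisms of Z/p (extended by the identity outside {..<p})\<close>
definition Aut :: "nat \<Rightarrow> (nat \<Rightarrow> nat) set" where
  "Aut p = {\<sigma>. bij_betw \<sigma> {..<p} {..<p} \<and>
             (\<forall>x<p. \<forall>y<p. \<sigma> ((x + y) mod p) = (\<sigma> x + \<sigma> y) mod p) \<and>
             (\<forall>x. p \<le> x \<longrightarrow> \<sigma> x = x)}"

definition chi_act :: "nat \<Rightarrow> (nat \<Rightarrow> nat) \<Rightarrow> (nat \<Rightarrow> complex) \<Rightarrow> nat \<Rightarrow> complex" where
  "chi_act p \<sigma> f = (\<lambda>h. if h < p then f (inv_into {..<p} \<sigma> h) else 0)"

definition I_sig :: "nat \<Rightarrow> (nat \<Rightarrow> nat) \<Rightarrow> nat \<Rightarrow> nat \<Rightarrow> int" where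
  "I_sig p \<sigma> = mat_of p (\<lambda>a. chi_act p \<sigma> (chi p a))"

definition sdp :: "nat \<Rightarrow> (nat \<times> (nat \<Rightarrow> nat)) monoid" where
  "sdp p = \<lparr>carrier = {..<p} \<times> Aut p,
            mult = (\<lambda>(h, \<sigma>) (h', \<sigma>'). ((h + \<sigma> h') mod p, \<sigma> \<circ> \<sigma>')),
            one = (0, id)\<rparr>"

text \<open>cyclic group of order 2 (= <-id>)\<close>
definition C2 :: "int monoid" where
  "C2 = \<lparr>carrier = {1, -1}, mult = (*), one = 1\<rparr>"

end

theory Submission
  imports Defs "HOL-Computational_Algebra.Polynomial_Factorial" "HOL-Number_Theory.Cong"
begin

text \<open>An isometry of R_K(B) has an integral orthogonal matrix, so it maps every \<chi>_a to
  \<plusminus>\<chi>_\<pi>(a) for a permutation \<pi> of \<int>/p. Perfectness makes \<mu>(1, h) vanish for h \<noteq> 1, and by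
  orthogonality of the characters this gives one common sign. Next, \<mu>(g, g^y) = \<plusminus>\<Sum>_k N_k \<zeta>^k,
  where N_k counts the a with \<pi>(a) + a y \<equiv> k (mod p). As \<zeta> has the minimal polynomial
  1 + x + ... + x^(p-1) (irreducible by Eisenstein), integrality of \<mu>(g, g^y)/p forces all N_k to be
  congruent mod p. Choosing y with \<pi>(0) \<equiv> \<pi>(1) + y puts 0 and 1 into one fibre, which must then be
  everything; hence \<pi>(a) = c + t a. Conversely every \<chi>_a \<mapsto> \<plusminus>\<chi>_(c+ta) with t \<noteq> 0 is a perfect
  isometry; these compose like the affine group of \<int>/p times {\<plusminus>1}, and \<chi>_a \<mapsto> \<chi>_(c+ta) is
  I_\<lambda> \<circ> I_\<sigma> for \<lambda> = \<chi>_c and \<sigma>(h) = h/t.\<close>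

section \<open>Roots of unity\<close>

definition unity_root :: "nat \<Rightarrow> int \<Rightarrow> complex" where
  "unity_root p k = cis (2 * pi * of_int k / real p)"

lemma unity_root_add: "unity_root p (k + l) = unity_root p k * unity_root p l"
  by (simp add: unity_root_def cis_mult add_divide_distrib distrib_left)

lemma unity_root_0 [simp]: "unity_root p 0 = 1"
  by (simp add: unity_root_def)

lemma unity_root_multiple: "p > 0 \<Longrightarrow> unity_root p (int p * j) = 1"
proof -
  assume "p > 0"
  hence "2 * pi * of_int (int p * j) / real p = 2 * pi * of_int j" by simp
  thus ?thesis unfolding unity_root_def by simp
qed

lemma unity_root_mod: "p > 0 \<Longrightarrow> unity_root p (k mod int p) = unity_root p k"
proof -
  assume p: "p > 0"
  have "unity_root p k = unity_root p (k mod int p + int p * (k div int p))" by simp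
  also have "\<dots> = unity_root p (k mod int p)"
    by (simp only: unity_root_add unity_root_multiple[OF p] mult_1_right)
  finally show ?thesis by simp
qed

lemma unity_root_cong: "p > 0 \<Longrightarrow> k mod int p = l mod int p \<Longrightarrow> unity_root p k = unity_root p l"
  by (metis unity_root_mod)

lemma unity_root_eq_1_imp_dvd: "p > 0 \<Longrightarrow> unity_root p k = 1 \<Longrightarrow> int p dvd k"
proof -
  assume p: "p > 0" and "unity_root p k = 1"
  hence "cos (2 * pi * of_int k / real p) = 1" unfolding unity_root_def
    by (metis cis.sel(1) one_complex.simps(1))
  then obtain n :: int where "2 * pi * of_int k / real p = of_int n * 2 * pi"
    using cos_one_2pi_int by blast
  hence "real_of_int k = of_int n * real p" using p by (simp add: field_simps)
  hence "k = n * int p" by (metis of_int_eq_iff of_int_mult of_int_of_nat_eq)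
  thus ?thesis by simp
qed

lemma unity_root_power: "unity_root p k ^ n = unity_root p (k * int n)"
  by (induct n) (simp_all add: unity_root_add algebra_simps)

lemma zeta_power: "zeta p ^ n = unity_root p (int n)"
  unfolding zeta_def unity_root_def DeMoivre by (simp add: field_simps)

lemma sum_unity_root:
  assumes p: "p > 0"
  shows "(\<Sum>x<p. unity_root p (k * int x)) = (if int p dvd k then of_nat p else 0)"
proof (cases "int p dvd k")
  case True
  then obtain j where "k = int p * j" by blast
  hence "\<And>x. unity_root p (k * int x) = 1" using p by (metis mult.assoc unity_root_multiple)
  thus ?thesis using True by simp
next
  case False
  hence ne: "unity_root p k \<noteq> 1" using unity_root_eq_1_imp_dvd p by blast
  have "(\<Sum>x<p. unity_root p (k * int x)) = (\<Sum>x<p. unity_root p k ^ x)"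
    by (simp add: unity_root_power)
  also have "\<dots> = (unity_root p k ^ p - 1) / (unity_root p k - 1)" by (rule geometric_sum[OF ne])
  also have "unity_root p k ^ p = 1"
    using unity_root_multiple[OF p, of k] by (simp add: unity_root_power mult.commute)
  finally show ?thesis using False by simp
qed

section \<open>Irreducibility of the cyclotomic polynomial\<close>

definition cyclo :: "nat \<Rightarrow> int poly" where
  "cyclo p = (\<Sum>k<p. [:0,1:] ^ k)"

lemma pcompose_power: "pcompose (q ^ n) r = (pcompose q r) ^ n"
  by (induct n) (simp_all add: pcompose_1 pcompose_mult)

lemma coeff_monomial_power: "coeff ([:0,1::'a::comm_semiring_1:] ^ k) n = (if n = k then 1 else 0)"
  by (metis coeff_monom monom_altdef smult_1_left)

lemma coeff_cyclo: "coeff (cyclo p) n = (if n < p then 1 else 0)"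
  unfolding cyclo_def coeff_sum coeff_monomial_power by (simp add: sum.delta)

lemma degree_cyclo: "p > 0 \<Longrightarrow> degree (cyclo p) = p - 1"
proof -
  assume p: "p > 0"
  have "degree (cyclo p) \<le> p - 1"
    by (rule degree_le) (auto simp: coeff_cyclo)
  moreover have "coeff (cyclo p) (p - 1) \<noteq> 0" using p by (simp add: coeff_cyclo)
  ultimately show ?thesis by (metis le_antisym le_degree)
qed

lemma pCons_0_cyclo_shift: "pCons 0 (pcompose (cyclo p) [:1,1:]) = [:1,1:] ^ p - 1"
proof -
  have "[:0,1:] ^ p - 1 = ([:0,1:] - 1) * cyclo p"
    unfolding cyclo_def by (rule power_diff_1_eq)
  hence "pcompose ([:0,1::int:] ^ p - 1) [:1,1:] = pcompose (([:0,1:] - 1) * cyclo p) [:1,1:]"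
    by simp
  hence "[:1,1:] ^ p - 1 = pcompose ([:0,1:] - 1) [:1,1::int:] * pcompose (cyclo p) [:1,1:]"
    by (simp add: pcompose_diff pcompose_power pcompose_1 pcompose_mult pcompose_pCons)
  also have "pcompose ([:0,1:] - 1) [:1,1::int:] = [:0,1:]"
    by (simp add: pcompose_diff pcompose_1 pcompose_pCons one_pCons)
  finally show ?thesis by simp
qed

lemma coeff_cyclo_shift: "coeff (pcompose (cyclo p) [:1,1:]) k = int (p choose (Suc k))"
proof -
  have "coeff (pcompose (cyclo p) [:1,1:]) k = coeff ([:1,1:] ^ p) (Suc k)"
    using arg_cong[OF pCons_0_cyclo_shift, of "\<lambda>q. coeff q (Suc k)"] by simp
  also have "\<dots> = int (p choose (Suc k))"
  proof (cases "Suc k \<le> p")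
    case True thus ?thesis by (simp add: coeff_linear_poly_power)
  next
    case False
    hence "coeff ([:1,1::int:] ^ p) (Suc k) = 0"
      by (intro coeff_eq_0) (simp add: degree_linear_power)
    thus ?thesis using False by simp
  qed
  finally show ?thesis .
qed

text \<open>In a factorisation P = F G with all non-leading coefficients of P divisible by q, look at
  the lowest coefficient of F not divisible by q.\<close>
lemma eisenstein_factor_lemma:
  fixes F G P :: "int poly" and q :: int
  assumes pr: "prime q" and FG: "P = F * G" and dv: "\<forall>k<degree P. q dvd coeff P k"
    and F0: "q dvd coeff F 0" and G0: "\<not> q dvd coeff G 0" and lF: "\<not> q dvd lead_coeff F"
    and dF: "degree F < degree P"
  shows False
proof -
  define i where "i = (LEAST i. \<not> q dvd coeff F i)"
  have ex: "\<not> q dvd coeff F (degree F)" using lF by simp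
  have i1: "\<not> q dvd coeff F i" unfolding i_def by (rule LeastI[of _ "degree F"], rule ex)
  have i2: "i \<le> degree F" unfolding i_def by (rule Least_le, rule ex)
  have lt: "\<And>j. j < i \<Longrightarrow> q dvd coeff F j" unfolding i_def using not_less_Least by blast
  have "q dvd coeff P i" using dv i2 dF by auto
  also have "coeff P i = (\<Sum>j\<le>i. coeff F j * coeff G (i - j))" unfolding FG coeff_mult ..
  also have "\<dots> = (\<Sum>j<i. coeff F j * coeff G (i - j)) + coeff F i * coeff G 0"
    by (simp add: lessThan_Suc_atMost[symmetric])
  finally have "q dvd (\<Sum>j<i. coeff F j * coeff G (i - j)) + coeff F i * coeff G 0" .
  moreover have "q dvd (\<Sum>j<i. coeff F j * coeff G (i - j))"
    by (rule dvd_sum) (simp add: lt)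
  ultimately have "q dvd coeff F i * coeff G 0" using dvd_add_right_iff by blast
  thus False using i1 G0 pr prime_dvd_mult_iff by blast
qed

lemma eisenstein_criterion:
  fixes F G P :: "int poly" and q :: int
  assumes pr: "prime q" and FG: "P = F * G" and dv: "\<forall>k<degree P. q dvd coeff P k"
    and P0: "\<not> q^2 dvd coeff P 0" and lP: "\<not> q dvd lead_coeff P"
    and dF: "degree F \<ge> 1" and dG: "degree G \<ge> 1"
  shows False
proof -
  have nz: "F \<noteq> 0" "G \<noteq> 0" using dF dG by auto
  have deg: "degree P = degree F + degree G" using FG nz degree_mult_eq by blast
  have "q dvd coeff P 0" using dv deg dF by auto
  hence c0: "q dvd coeff F 0 * coeff G 0" using FG by (simp add: coeff_mult_0)
  have "lead_coeff P = lead_coeff F * lead_coeff G" using FG lead_coeff_mult by blast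
  hence lF: "\<not> q dvd lead_coeff F" "\<not> q dvd lead_coeff G" using lP by auto
  have not_both: "\<not> (q dvd coeff F 0 \<and> q dvd coeff G 0)"
  proof
    assume "q dvd coeff F 0 \<and> q dvd coeff G 0"
    hence "q * q dvd coeff F 0 * coeff G 0" by (auto intro: mult_dvd_mono)
    thus False using P0 FG by (simp add: coeff_mult_0 power2_eq_square)
  qed
  from c0 pr have "q dvd coeff F 0 \<or> q dvd coeff G 0" using prime_dvd_mult_iff by blast
  thus False
  proof
    assume "q dvd coeff F 0"
    thus False using eisenstein_factor_lemma[OF pr FG dv _ _ lF(1)] not_both deg dG by auto
  next
    assume "q dvd coeff G 0"
    thus False using eisenstein_factor_lemma[OF pr _ dv _ _ lF(2), of F] FG not_both deg dF
      by (auto simp: mult.commute)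
  qed
qed

lemma constant_factor_is_unit:
  fixes f g :: "int poly"
  assumes "coeff (f * g) 0 = 1" "degree f = 0"
  shows "f dvd 1"
proof -
  from assms(2) obtain c where c: "f = [:c:]" by (metis degree_eq_zeroE)
  have "c * coeff g 0 = 1" using assms(1) c by (simp add: coeff_mult_0)
  hence "c dvd 1" by (metis dvdI)
  thus ?thesis using c by (simp add: is_unit_poly_iff)
qed

lemma degree_cyclo_shift: "p > 0 \<Longrightarrow> degree (pcompose (cyclo p) [:1,1:]) = p - 1"
  by (simp add: degree_pcompose degree_cyclo)

lemma cyclo_shift_eisenstein:
  assumes pr: "prime p"
  defines "S \<equiv> pcompose (cyclo p) [:1,1:]"
  shows "\<forall>k<degree S. int p dvd coeff S k" "\<not> (int p)^2 dvd coeff S 0" "\<not> int p dvd lead_coeff S"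
proof -
  have p1: "p > 1" using pr prime_gt_1_nat by blast
  have dS: "degree S = p - 1" unfolding S_def using p1 by (simp add: degree_cyclo_shift)
  show "\<forall>k<degree S. int p dvd coeff S k"
  proof (intro allI impI)
    fix k assume "k < degree S"
    hence "p dvd (p choose Suc k)" using pr p1 dS by (intro dvd_choose_prime) auto
    thus "int p dvd coeff S k" unfolding S_def by (simp add: coeff_cyclo_shift)
  qed
  show "\<not> (int p)^2 dvd coeff S 0"
  proof
    assume "(int p)^2 dvd coeff S 0"
    hence "int p * int p dvd int p * 1" unfolding S_def coeff_cyclo_shift by (simp add: power2_eq_square)
    hence "int p dvd 1" using p1 by (subst (asm) dvd_times_left_cancel_iff) auto
    thus False using p1 by simp
  qed
  show "\<not> int p dvd lead_coeff S"
    using p1 unfolding S_def by (simp add: degree_cyclo_shift coeff_cyclo_shift)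
qed

text \<open>Eisenstein at p applies to cyclo p (x + 1) = ((x + 1)^p - 1) / x.\<close>
lemma cyclo_irreducible:
  assumes pr: "prime p"
  shows "irreducible (cyclo p)"
proof (rule irreducibleI)
  have p1: "p > 1" using pr prime_gt_1_nat by blast
  have c0: "coeff (cyclo p) 0 = 1" using p1 by (simp add: coeff_cyclo)
  show "cyclo p \<noteq> 0" using c0 by auto
  show "\<not> cyclo p dvd 1"
  proof
    assume "cyclo p dvd 1"
    hence "degree (cyclo p) = 0" by (auto simp: is_unit_poly_iff)
    thus False using p1 degree_cyclo[of p] by simp
  qed
  fix f g assume fg: "cyclo p = f * g"
  show "f dvd 1 \<or> g dvd 1"
  proof (rule ccontr)
    assume "\<not> (f dvd 1 \<or> g dvd 1)"
    hence "degree f \<ge> 1" "degree g \<ge> 1"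
      using constant_factor_is_unit[of f g] constant_factor_is_unit[of g f] c0 fg
      by (auto simp: mult.commute Suc_le_eq)
    moreover have shift: "pcompose (cyclo p) [:1,1:] = pcompose f [:1,1:] * pcompose g [:1,1:]"
      unfolding fg pcompose_mult ..
    ultimately show False
      using eisenstein_criterion[OF _ shift cyclo_shift_eisenstein[OF pr]] pr
      by (simp add: degree_pcompose)
  qed
qed

section \<open>Linear relations among the powers of \<zeta>\<close>

definition eval_zeta :: "nat \<Rightarrow> int poly \<Rightarrow> complex" where
  "eval_zeta p D = poly (map_poly of_int D) (unity_root p 1)"

lemma map_poly_of_int_mult:
  "map_poly (of_int :: int \<Rightarrow> 'a::comm_ring_1) (D * E) = map_poly of_int D * map_poly of_int E"
  by (rule poly_eqI) (simp add: coeff_map_poly coeff_mult)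

lemma map_poly_of_int_add:
  "map_poly (of_int :: int \<Rightarrow> 'a::comm_ring_1) (D + E) = map_poly of_int D + map_poly of_int E"
  by (rule poly_eqI) (simp add: coeff_map_poly)

lemma eval_zeta_mult: "eval_zeta p (D * E) = eval_zeta p D * eval_zeta p E"
  by (simp add: eval_zeta_def map_poly_of_int_mult)

lemma eval_zeta_add: "eval_zeta p (D + E) = eval_zeta p D + eval_zeta p E"
  by (simp add: eval_zeta_def map_poly_of_int_add)

lemma eval_zeta_smult: "eval_zeta p (smult a E) = of_int a * eval_zeta p E"
  by (simp add: eval_zeta_def map_poly_smult)

lemma eval_zeta_const: "eval_zeta p [:c:] = of_int c"
  by (cases "c = 0") (simp_all add: eval_zeta_def map_poly_pCons)

lemma eval_zeta_eq_sum:
  assumes "degree D < N"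
  shows "eval_zeta p D = (\<Sum>i<N. of_int (coeff D i) * unity_root p (int i))"
proof -
  have dm: "degree (map_poly (of_int :: int \<Rightarrow> complex) D) = degree D"
    by (rule degree_map_poly) simp
  have "eval_zeta p D = (\<Sum>i\<le>degree D. of_int (coeff D i) * unity_root p 1 ^ i)"
    unfolding eval_zeta_def poly_altdef dm by (simp add: coeff_map_poly)
  also have "\<dots> = (\<Sum>i<N. of_int (coeff D i) * unity_root p 1 ^ i)"
    by (rule sum.mono_neutral_left) (use assms in \<open>auto simp: coeff_eq_0\<close>)
  finally show ?thesis by (simp add: unity_root_power)
qed

lemma eval_zeta_cyclo: "p > 1 \<Longrightarrow> eval_zeta p (cyclo p) = 0"
proof -
  assume p1: "p > 1"
  have "eval_zeta p (cyclo p) = (\<Sum>i<p. of_int (coeff (cyclo p) i) * unity_root p (int i))"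
    by (rule eval_zeta_eq_sum) (use p1 degree_cyclo in auto)
  also have "\<dots> = (\<Sum>i<p. unity_root p (1 * int i))" by (simp add: coeff_cyclo)
  also have "\<dots> = 0" using p1 by (subst sum_unity_root) auto
  finally show ?thesis .
qed

lemma eval_zeta_eq_0_imp_degree:
  assumes pr: "prime p"
  shows "D \<noteq> 0 \<Longrightarrow> eval_zeta p D = 0 \<Longrightarrow> degree D \<ge> p - 1"
proof (induction "degree D" arbitrary: D rule: less_induct)
  case less
  have p1: "p > 1" using pr prime_gt_1_nat by blast
  have prime_cyclo: "prime_elem (cyclo p)"
    using cyclo_irreducible[OF pr] by (rule irreducible_imp_prime_elem)
  show ?case
  proof (rule ccontr)
    assume lt: "\<not> degree D \<ge> p - 1"
    define r where "r = pseudo_mod (cyclo p) D"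
    obtain a q where aq: "a \<noteq> 0" "smult a (cyclo p) = D * q + r"
      using pseudo_mod(1)[OF less.prems(1)] unfolding r_def by blast
    have rd: "r = 0 \<or> degree r < degree D"
      using pseudo_mod(2)[OF less.prems(1)] unfolding r_def by blast
    have "eval_zeta p (smult a (cyclo p)) = 0" using p1 by (simp add: eval_zeta_smult eval_zeta_cyclo)
    hence "eval_zeta p r = 0" using aq(2) less.prems(2) by (simp add: eval_zeta_add eval_zeta_mult)
    hence r0: "r = 0" using rd lt less.hyps[of r] by fastforce
    have "D * q = [:a:] * cyclo p" using aq(2) r0 by simp
    hence "cyclo p dvd D * q" by (simp add: dvd_smult)
    hence "cyclo p dvd D \<or> cyclo p dvd q" using prime_cyclo prime_elem_dvd_mult_iff by blast
    thus False
    proof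
      assume "cyclo p dvd D"
      hence "degree (cyclo p) \<le> degree D" using less.prems(1) dvd_imp_degree_le by blast
      thus False using lt p1 by (simp add: degree_cyclo)
    next
      assume "cyclo p dvd q"
      then obtain s where s: "q = cyclo p * s" by blast
      have "[:a:] * cyclo p = (D * s) * cyclo p" using aq(2) r0 s by (simp add: mult_ac)
      moreover have "cyclo p \<noteq> 0" using prime_cyclo by auto
      ultimately have Ds: "[:a:] = D * s" using mult_cancel_right by blast
      hence "s \<noteq> 0" using aq(1) by auto
      hence "degree D + degree s = 0" using less.prems(1) degree_mult_eq[of D s] by (simp flip: Ds)
      hence "degree D = 0" by simp
      then obtain c where "D = [:c:]" by (metis degree_eq_zeroE)
      thus False using less.prems by (simp add: eval_zeta_const)
    qed
  qed
qed

text \<open>Since cyclo p is the minimal polynomial of \<zeta>, the only integral relations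
  \<Sum>_(k<p) d_k \<zeta>^k = 0 are those with constant coefficients.\<close>
lemma sum_unity_root_eq_0_imp_const:
  assumes pr: "prime p" and sum0: "(\<Sum>k<p. of_int (d k) * unity_root p (int k)) = 0"
  shows "\<forall>k<p. d k = d 0"
proof -
  have p1: "p > 1" using pr prime_gt_1_nat by blast
  define E where "E = (\<Sum>k<p. monom (d k) k) - smult (d (p - 1)) (cyclo p)"
  have cE: "coeff E k = (if k < p then d k - d (p - 1) else 0)" for k
    unfolding E_def by (simp add: coeff_sum coeff_monom sum.delta' coeff_cyclo)
  have dE: "degree E < p" by (rule degree_lessI) (use p1 cE in auto)
  have "eval_zeta p E = (\<Sum>k<p. of_int (coeff E k) * unity_root p (int k))"
    by (rule eval_zeta_eq_sum[OF dE])
  also have "\<dots> = (\<Sum>k<p. of_int (d k) * unity_root p (int k))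
                   - of_int (d (p - 1)) * (\<Sum>k<p. unity_root p (1 * int k))"
    by (simp add: cE algebra_simps sum_subtractf sum_distrib_left)
  also have "\<dots> = 0" using sum0 p1 by (subst sum_unity_root) auto
  finally have evE: "eval_zeta p E = 0" .
  have "E = 0"
  proof (rule ccontr)
    assume "E \<noteq> 0"
    hence "degree E = p - 1" using eval_zeta_eq_0_imp_degree[OF pr] evE dE by fastforce
    moreover have "coeff E (p - 1) = 0" using cE by simp
    ultimately show False using \<open>E \<noteq> 0\<close> by (metis leading_coeff_0_iff)
  qed
  show ?thesis
  proof (intro allI impI)
    fix k assume "k < p"
    thus "d k = d 0" using cE[of k] cE[of 0] p1 \<open>E = 0\<close> by simp
  qed
qed

section \<open>Orthogonality of characters\<close>

lemma dvd_diff_less_modulus_iff: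
  "a < p \<Longrightarrow> b < (p::nat) \<Longrightarrow> int p dvd (int a - int b) \<longleftrightarrow> a = b"
  using cong_less_modulus_unique_nat[of a b p]
  by (auto simp flip: cong_iff_dvd_diff cong_int_iff)

lemma chi_eq_unity_root: "x < p \<Longrightarrow> chi p a x = unity_root p (int a * int x)"
  by (simp add: chi_def zeta_power)

lemma chi_at_0 [simp]: "p > 0 \<Longrightarrow> chi p k 0 = 1"
  by (simp add: chi_def)

lemma chi_add: "p > 0 \<Longrightarrow> chi p ((c + a) mod p) x = chi p c x * chi p a x"
proof (cases "x < p")
  case True
  assume p: "p > 0"
  have "chi p ((c + a) mod p) x = unity_root p (int ((c + a) mod p) * int x)"
    using True by (simp add: chi_eq_unity_root)
  also have "\<dots> = unity_root p (int (c + a) * int x)"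
    by (rule unity_root_cong[OF p]) (simp add: zmod_int mod_mult_left_eq)
  also have "\<dots> = unity_root p (int c * int x) * unity_root p (int a * int x)"
    by (simp add: unity_root_add[symmetric] algebra_simps)
  finally show ?thesis using True by (simp add: chi_eq_unity_root)
next
  case False thus ?thesis by (simp add: chi_def)
qed

text \<open>(p - x) mod p is the exponent of the inverse of g^x.\<close>
lemma chi_inverse:
  assumes p: "p > 0" and x: "x < p"
  shows "chi p b ((p - x) mod p) = unity_root p (- (int b * int x))"
proof -
  have m: "int ((p - x) mod p) = (- int x) mod int p" using x by (simp add: zmod_int of_nat_diff)
  have "chi p b ((p - x) mod p) = unity_root p (int b * int ((p - x) mod p))"
    using p by (simp add: chi_eq_unity_root)
  also have "\<dots> = unity_root p (- (int b * int x))"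
    by (rule unity_root_cong[OF p]) (simp add: m mod_mult_right_eq)
  finally show ?thesis .
qed

lemma chi_orthogonality:
  assumes p: "p > 0" and a: "a < p" and b: "b < p"
  shows "(\<Sum>x<p. chi p a x * chi p b ((p - x) mod p)) = (if a = b then of_nat p else 0)"
proof -
  have "(\<Sum>x<p. chi p a x * chi p b ((p - x) mod p)) = (\<Sum>x<p. unity_root p ((int a - int b) * int x))"
  proof (rule sum.cong)
    fix x assume "x \<in> {..<p}"
    hence x: "x < p" by simp
    have "chi p a x * chi p b ((p - x) mod p)
        = unity_root p (int a * int x) * unity_root p (- (int b * int x))"
      by (simp only: chi_inverse[OF p x] chi_eq_unity_root[OF x])
    also have "\<dots> = unity_root p ((int a - int b) * int x)"
      by (simp only: unity_root_add[symmetric]) (simp add: algebra_simps)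
    finally show "chi p a x * chi p b ((p - x) mod p) = unity_root p ((int a - int b) * int x)" .
  qed simp
  also have "\<dots> = (if int p dvd (int a - int b) then of_nat p else 0)" by (rule sum_unity_root[OF p])
  also have "int p dvd (int a - int b) \<longleftrightarrow> a = b"
    using a b by (rule dvd_diff_less_modulus_iff)
  finally show ?thesis .
qed

lemma ip_vchar:
  assumes p: "p > 0"
  shows "ip p (vchar p c) (vchar p d) = of_int (\<Sum>a<p. c a * d a)"
proof -
  define F where "F = (\<lambda>a b x. of_int (c a) * of_int (d b) * (chi p a x * chi p b ((p - x) mod p)))"
  have "(\<Sum>x<p. vchar p c x * vchar p d ((p - x) mod p)) = (\<Sum>x<p. \<Sum>a<p. \<Sum>b<p. F a b x)"
    unfolding vchar_def sum_product F_def by (intro sum.cong refl) (simp add: ac_simps)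
  also have "\<dots> = (\<Sum>a<p. \<Sum>x<p. \<Sum>b<p. F a b x)" by (rule sum.swap)
  also have "\<dots> = (\<Sum>a<p. \<Sum>b<p. \<Sum>x<p. F a b x)" by (intro sum.cong refl sum.swap)
  also have "\<dots> = (\<Sum>a<p. \<Sum>b<p. if b = a then of_int (c a) * of_int (d a) * of_nat p else 0)"
    unfolding F_def by (intro sum.cong refl) (simp add: sum_distrib_left[symmetric] chi_orthogonality p)
  also have "\<dots> = (\<Sum>a<p. of_int (c a) * of_int (d a) * of_nat p)" by simp
  finally show ?thesis unfolding ip_def using p by (simp add: sum_distrib_right[symmetric])
qed

lemma vchar_indicator:
  assumes b: "b < p"
  shows "vchar p (\<lambda>a. if a = b then 1 else 0) = chi p b"
proof
  fix x
  have "vchar p (\<lambda>a. if a = b then 1 else 0) x = (\<Sum>a<p. if a = b then chi p a x else 0)"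
    unfolding vchar_def by (rule sum.cong) auto
  thus "vchar p (\<lambda>a. if a = b then 1 else 0) x = chi p b x" using b by simp
qed

lemma ip_vchar_chi:
  assumes p: "p > 0" and b: "b < p"
  shows "ip p (vchar p c) (chi p b) = of_int (c b)"
  using ip_vchar[OF p, of c "\<lambda>a. if a = b then 1 else 0"] vchar_indicator[OF b] b
  by (simp add: if_distrib sum.delta' cong: if_cong)

lemma vchar_eq_imp_coeff_eq:
  assumes p: "p > 0" and eq: "vchar p c = vchar p c'" and b: "b < p"
  shows "c b = c' b"
  using ip_vchar_chi[OF p b, of c] ip_vchar_chi[OF p b, of c'] eq by simp

lemma mat_of_unique:
  assumes p: "p > 0" and M: "M \<in> mats p" and f: "\<forall>a<p. vchar p (M a) = f a"
  shows "mat_of p f = M"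
  unfolding mat_of_def
proof (rule the_equality)
  show "M \<in> mats p \<and> (\<forall>a<p. vchar p (M a) = f a)" using M f by blast
  fix M' assume M': "M' \<in> mats p \<and> (\<forall>a<p. vchar p (M' a) = f a)"
  show "M' = M"
  proof (intro ext)
    fix a b
    show "M' a b = M a b"
    proof (cases "a < p \<and> b < p")
      case True
      hence "vchar p (M' a) = vchar p (M a)" using M' f by simp
      thus ?thesis using vchar_eq_imp_coeff_eq[OF p] True by blast
    next
      case False
      thus ?thesis using M M' unfolding mats_def by auto
    qed
  qed
qed

section \<open>Isometries are signed permutations\<close>

definition gram :: "nat \<Rightarrow> (nat \<Rightarrow> nat \<Rightarrow> int) \<Rightarrow> nat \<Rightarrow> nat \<Rightarrow> int" where
  "gram p M a a' = (\<Sum>b<p. M a b * M a' b)"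

lemma lmap_dot:
  "(\<Sum>b<p. lmap p M c b * lmap p M d b) = (\<Sum>a<p. \<Sum>a'<p. c a * d a' * gram p M a a')"
proof -
  define F where "F = (\<lambda>a a' b. c a * d a' * (M a b * M a' b))"
  have "(\<Sum>b<p. lmap p M c b * lmap p M d b) = (\<Sum>b<p. \<Sum>a<p. \<Sum>a'<p. F a a' b)"
    unfolding lmap_def F_def by (intro sum.cong refl) (simp add: sum_product ac_simps)
  also have "\<dots> = (\<Sum>a<p. \<Sum>b<p. \<Sum>a'<p. F a a' b)" by (rule sum.swap)
  also have "\<dots> = (\<Sum>a<p. \<Sum>a'<p. \<Sum>b<p. F a a' b)" by (intro sum.cong refl sum.swap)
  also have "\<dots> = (\<Sum>a<p. \<Sum>a'<p. c a * d a' * gram p M a a')"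
    unfolding F_def gram_def by (simp add: sum_distrib_left)
  finally show ?thesis .
qed

definition unit_vec :: "nat \<Rightarrow> nat \<Rightarrow> int" where
  "unit_vec a = (\<lambda>x. if x = a then 1 else 0)"

lemma lmap_unit_vec:
  assumes "a < p"
  shows "lmap p M (unit_vec a) b = (if b < p then M a b else 0)"
proof -
  have "(\<Sum>a'<p. unit_vec a a' * M a' b) = (\<Sum>a'<p. if a' = a then M a b else 0)"
    by (rule sum.cong) (auto simp: unit_vec_def)
  thus ?thesis using assms unfolding lmap_def by simp
qed

lemma sum_unit_vec_mult:
  "a < p \<Longrightarrow> (\<Sum>x<p. unit_vec a x * unit_vec a' x) = (if a = a' then 1 else 0)"
  by (simp add: unit_vec_def if_distrib[of "\<lambda>z. z * _"] cong: if_cong)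

lemma isometry_gram:
  assumes p: "p > 0" and iso: "isometry p M" and a: "a < p" and a': "a' < p"
  shows "gram p M a a' = (if a = a' then 1 else 0)"
proof -
  have "unit_vec a \<in> Zsupp p" "unit_vec a' \<in> Zsupp p"
    using a a' by (auto simp: unit_vec_def Zsupp_def)
  hence "ip p (vchar p (lmap p M (unit_vec a))) (vchar p (lmap p M (unit_vec a')))
       = ip p (vchar p (unit_vec a)) (vchar p (unit_vec a'))"
    using iso unfolding isometry_def by blast
  hence "of_int (\<Sum>b<p. lmap p M (unit_vec a) b * lmap p M (unit_vec a') b)
       = (of_int (\<Sum>x<p. unit_vec a x * unit_vec a' x) :: complex)"
    unfolding ip_vchar[OF p] .
  thus ?thesis
    using a a' unfolding of_int_eq_iff by (simp add: lmap_unit_vec gram_def sum_unit_vec_mult)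
qed

lemma gram_isometry:
  assumes p: "p > 0" and gram: "\<forall>a<p. \<forall>a'<p. gram p M a a' = (if a = a' then 1 else 0)"
  shows "isometry p M"
  unfolding isometry_def
proof (intro ballI)
  fix c d
  have "(\<Sum>a<p. \<Sum>a'<p. c a * d a' * gram p M a a') = (\<Sum>a<p. \<Sum>a'<p. if a' = a then c a * d a else 0)"
    using gram by (intro sum.cong refl) auto
  also have "\<dots> = (\<Sum>a<p. c a * d a)" by (simp add: sum.delta)
  finally show "ip p (vchar p (lmap p M c)) (vchar p (lmap p M d)) = ip p (vchar p c) (vchar p d)"
    unfolding ip_vchar[OF p] lmap_dot by simp
qed

lemma sum_squares_eq_1_imp_signed_unit:
  fixes f :: "nat \<Rightarrow> int"
  assumes s: "(\<Sum>b<p. f b * f b) = 1"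
  shows "\<exists>b<p. (f b = 1 \<or> f b = -1) \<and> (\<forall>b'<p. b' \<noteq> b \<longrightarrow> f b' = 0)"
proof -
  obtain b where b: "b < p" "f b \<noteq> 0"
    using s by (metis (no_types, lifting) lessThan_iff mult_zero_left sum.neutral zero_neq_one)
  have split: "(\<Sum>b<p. f b * f b) = f b * f b + (\<Sum>b'\<in>{..<p} - {b}. f b' * f b')"
    using b by (subst sum.remove[of _ b]) auto
  have nn: "(\<Sum>b'\<in>{..<p} - {b}. f b' * f b') \<ge> 0" by (intro sum_nonneg) simp
  have "f b * f b > 0" using b(2) by (auto simp: zero_less_mult_iff)
  hence fb: "f b * f b = 1" and rest: "(\<Sum>b'\<in>{..<p} - {b}. f b' * f b') = 0"
    using s split nn by linarith+
  have "\<forall>b'<p. b' \<noteq> b \<longrightarrow> f b' = 0"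
    using rest by (subst (asm) sum_nonneg_eq_0_iff) auto
  moreover have "f b = 1 \<or> f b = -1" using fb by (metis zmult_eq_1_iff)
  ultimately show ?thesis using b by blast
qed

text \<open>The column where row a of an isometry is nonzero: the \<pi>(a) with I(\<chi>_a) = \<plusminus>\<chi>_\<pi>(a).\<close>
definition supp_col :: "nat \<Rightarrow> (nat \<Rightarrow> nat \<Rightarrow> int) \<Rightarrow> nat \<Rightarrow> nat" where
  "supp_col p M a = (SOME b. b < p \<and> M a b \<noteq> 0)"

lemma isometry_row:
  assumes p: "p > 0" and iso: "isometry p M" and a: "a < p"
  shows "supp_col p M a < p" "M a (supp_col p M a) = 1 \<or> M a (supp_col p M a) = -1"
        "\<And>b. b < p \<Longrightarrow> b \<noteq> supp_col p M a \<Longrightarrow> M a b = 0"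
proof -
  have "(\<Sum>b<p. M a b * M a b) = 1" using isometry_gram[OF p iso a a] unfolding gram_def by simp
  then obtain b where b: "b < p" "M a b = 1 \<or> M a b = -1" "\<forall>b'<p. b' \<noteq> b \<longrightarrow> M a b' = 0"
    using sum_squares_eq_1_imp_signed_unit by blast
  have "supp_col p M a = b" unfolding supp_col_def
    by (rule some_equality) (use b in auto)
  thus "supp_col p M a < p" "M a (supp_col p M a) = 1 \<or> M a (supp_col p M a) = -1"
       "\<And>b'. b' < p \<Longrightarrow> b' \<noteq> supp_col p M a \<Longrightarrow> M a b' = 0"
    using b by auto
qed

lemma supp_col_inj:
  assumes p: "p > 0" and iso: "isometry p M" and a: "a < p" and a': "a' < p"
    and eq: "supp_col p M a = supp_col p M a'"
  shows "a = a'"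
proof (rule ccontr)
  assume ne: "a \<noteq> a'"
  let ?b = "supp_col p M a"
  have "gram p M a a' = (\<Sum>b<p. if b = ?b then M a ?b * M a' ?b else 0)"
    unfolding gram_def using isometry_row(3)[OF p iso a] by (intro sum.cong refl) auto
  also have "\<dots> = M a ?b * M a' ?b" using isometry_row(1)[OF p iso a] by simp
  finally have "gram p M a a' = M a ?b * M a' ?b" .
  moreover have "M a ?b \<noteq> 0" "M a' ?b \<noteq> 0"
    using isometry_row(2)[OF p iso a] isometry_row(2)[OF p iso a'] eq by auto
  ultimately show False using isometry_gram[OF p iso a a'] ne by simp
qed

lemma vchar_single:
  assumes k: "k < p" and z: "\<forall>b<p. b \<noteq> k \<longrightarrow> r b = 0"
  shows "vchar p r x = of_int (r k) * chi p k x"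
proof -
  have "vchar p r x = (\<Sum>b<p. if b = k then of_int (r k) * chi p k x else 0)"
    unfolding vchar_def using z by (intro sum.cong refl) auto
  thus ?thesis using k by simp
qed

lemma mu_isometry:
  assumes p: "p > 0" and iso: "isometry p M"
  shows "mu p M x y = (\<Sum>a<p. of_int (M a (supp_col p M a)) * chi p (supp_col p M a) x * chi p a y)"
  unfolding mu_def img_def
  by (intro sum.cong refl) (simp add: vchar_single isometry_row[OF p iso])

text \<open>Perfectness makes y \<mapsto> \<mu>(1, y) supported at the identity, so its Fourier coefficients
  p \<epsilon>_a all equal \<mu>(1, 1).\<close>
lemma perfect_isometry_sign_const:
  assumes p: "p > 0" and iso: "isometry p M" and perf: "perfect p M" and a0: "a0 < p"
  shows "M a0 (supp_col p M a0) = M 0 (supp_col p M 0)"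
proof -
  define e where "e a = M a (supp_col p M a)" for a
  have "of_int (e a) * of_nat p = mu p M 0 0" if a: "a < p" for a
  proof -
    have "(\<Sum>y<p. mu p M 0 y * chi p a ((p - y) mod p))
        = (\<Sum>y<p. \<Sum>b<p. of_int (e b) * (chi p b y * chi p a ((p - y) mod p)))"
      unfolding mu_isometry[OF p iso] e_def sum_distrib_right using p
      by (intro sum.cong refl) (simp add: mult.assoc)
    also have "\<dots> = (\<Sum>b<p. of_int (e b) * (\<Sum>y<p. chi p b y * chi p a ((p - y) mod p)))"
      by (subst sum.swap) (simp add: sum_distrib_left)
    also have "\<dots> = (\<Sum>b<p. if b = a then of_int (e a) * of_nat p else 0)"
      by (intro sum.cong refl) (simp add: chi_orthogonality p a)
    also have "\<dots> = of_int (e a) * of_nat p" using a by simp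
    finally have "(\<Sum>y<p. mu p M 0 y * chi p a ((p - y) mod p)) = of_int (e a) * of_nat p" .
    moreover have "\<forall>y<p. y \<noteq> 0 \<longrightarrow> mu p M 0 y = 0" using perf p unfolding perfect_def by auto
    hence "(\<Sum>y<p. mu p M 0 y * chi p a ((p - y) mod p)) = mu p M 0 0 * chi p a ((p - 0) mod p)"
      using p by (subst sum.remove[of _ 0]) auto
    ultimately show ?thesis using p by simp
  qed
  hence "of_int (e a0) * of_nat p = (of_int (e 0) * of_nat p :: complex)" using a0 p by simp
  thus ?thesis using p unfolding e_def by simp
qed

section \<open>Perfect isometries are affine\<close>

lemma sum_group_by_value:
  assumes "\<forall>a<p. f a < p"
  shows "(\<Sum>a<p. unity_root q (int (f a)))
       = (\<Sum>k<p. of_nat (card {a\<in>{..<p}. f a = k}) * unity_root q (int k))"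
proof -
  have "(\<Sum>a<p. unity_root q (int (f a)))
      = (\<Sum>k\<in>{..<p}. \<Sum>a\<in>{x. x \<in> {..<p} \<and> f x = k}. unity_root q (int (f a)))"
    by (rule sum.group[symmetric]) (use assms in auto)
  also have "\<dots> = (\<Sum>k<p. of_nat (card {a\<in>{..<p}. f a = k}) * unity_root q (int k))"
    by (intro sum.cong refl) simp
  finally show ?thesis .
qed

lemma mu_at_one:
  assumes p1: "p > 1" and iso: "isometry p M" and sign: "\<forall>a<p. M a (supp_col p M a) = \<epsilon>"
    and y: "y < p"
  shows "mu p M 1 y = of_int \<epsilon> * (\<Sum>k<p. of_nat (card {a\<in>{..<p}. (supp_col p M a + a * y) mod p = k})
                                       * unity_root p (int k))"
proof -
  have p: "p > 0" using p1 by simp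
  have "mu p M 1 y = (\<Sum>a<p. of_int \<epsilon> * unity_root p (int ((supp_col p M a + a * y) mod p)))"
    unfolding mu_isometry[OF p iso]
  proof (intro sum.cong refl)
    fix a assume "a \<in> {..<p}"
    hence "chi p (supp_col p M a) 1 * chi p a y = unity_root p (int (supp_col p M a + a * y))"
      using p1 y by (simp add: chi_eq_unity_root unity_root_add[symmetric])
    also have "\<dots> = unity_root p (int ((supp_col p M a + a * y) mod p))"
      using p by (simp add: zmod_int unity_root_mod)
    finally show "of_int (M a (supp_col p M a)) * chi p (supp_col p M a) 1 * chi p a y
        = of_int \<epsilon> * unity_root p (int ((supp_col p M a + a * y) mod p))"
      using sign \<open>a \<in> {..<p}\<close> by (simp add: mult.assoc)
  qed
  also have "\<dots> = of_int \<epsilon> * (\<Sum>a<p. unity_root p (int ((supp_col p M a + a * y) mod p)))"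
    by (simp add: sum_distrib_left)
  finally show ?thesis using p by (simp add: sum_group_by_value)
qed

text \<open>Integrality of (\<Sum>_k n_k \<zeta>^k) / p means \<Sum>_k (s n_k - p m_k) \<zeta>^k = 0 for some s prime to p
  and integers m_k, so all s n_k - p m_k coincide.\<close>
lemma in_O_imp_coeffs_cong:
  assumes pr: "prime p" and int: "in_O p ((\<Sum>k<p. of_int (n k) * unity_root p (int k)) / of_nat p)"
    and k: "k < p"
  shows "int p dvd n k - n 0"
proof -
  have p: "p > 0" using pr prime_gt_0_nat by blast
  obtain s m where s: "coprime s (int p)"
    and m: "of_int s * ((\<Sum>k<p. of_int (n k) * unity_root p (int k)) / of_nat p)
            = (\<Sum>k<p. of_int (m k) * zeta p ^ k)"
    using int unfolding in_O_def Zzeta_def by blast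
  define D where "D k = s * n k - int p * m k" for k
  have "(\<Sum>k<p. of_int (D k) * unity_root p (int k))
      = of_int s * (\<Sum>k<p. of_int (n k) * unity_root p (int k))
        - of_nat p * (\<Sum>k<p. of_int (m k) * unity_root p (int k))"
    unfolding D_def by (simp add: sum_subtractf sum_distrib_left algebra_simps)
  also have "of_int s * (\<Sum>k<p. of_int (n k) * unity_root p (int k))
      = of_nat p * (\<Sum>k<p. of_int (m k) * unity_root p (int k))"
    using m p by (simp add: zeta_power field_simps)
  finally have "(\<Sum>k<p. of_int (D k) * unity_root p (int k)) = 0" by simp
  hence "D k = D 0" using sum_unity_root_eq_0_imp_const[OF pr] k by blast
  hence "s * (n k - n 0) = int p * (m k - m 0)" unfolding D_def by (simp add: algebra_simps)
  hence "int p dvd s * (n k - n 0)" by simp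
  thus ?thesis using s by (simp add: coprime_commute coprime_dvd_mult_right_iff)
qed

text \<open>Unless the fibre over k0 is everything, the congruences force every fibre to be at least as
  large, so the p fibres would have more than p elements in total.\<close>
lemma fibres_cong_imp_const:
  fixes f :: "nat \<Rightarrow> nat" and p k0 :: nat
  assumes fr: "\<forall>a<p. f a < p" and k0: "k0 < p"
    and cong: "\<forall>k<p. int p dvd int (card {a\<in>{..<p}. f a = k}) - int (card {a\<in>{..<p}. f a = k0})"
    and two: "card {a\<in>{..<p}. f a = k0} \<ge> 2"
  shows "\<forall>a<p. f a = k0"
proof -
  define N where "N k = card {a\<in>{..<p}. f a = k}" for k
  have total: "(\<Sum>k<p. N k) = p"
    using sum.group[of "{..<p}" "{..<p}" f "\<lambda>_. 1::nat"] fr unfolding N_def by auto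
  have le: "N k0 \<le> p"
    using card_mono[of "{..<p}" "{a\<in>{..<p}. f a = k0}"] unfolding N_def by auto
  have "N k0 = p"
  proof (rule ccontr)
    assume "N k0 \<noteq> p"
    hence lt: "N k0 < p" using le by simp
    have "N k \<ge> 2" if k: "k < p" for k
    proof -
      obtain j where j: "int (N k) - int (N k0) = int p * j" using cong k unfolding N_def by blast
      have "j \<ge> 0"
      proof (rule ccontr)
        assume "\<not> j \<ge> 0"
        hence "int p * j \<le> int p * (- 1)" by (intro mult_left_mono) auto
        thus False using j lt by linarith
      qed
      hence "int p * j \<ge> 0" by simp
      hence "int (N k) \<ge> int (N k0)" using j by linarith
      thus ?thesis using two unfolding N_def by linarith
    qed
    hence "(\<Sum>k<p. (2::nat)) \<le> (\<Sum>k<p. N k)" by (intro sum_mono) simp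
    thus False using total k0 by simp
  qed
  hence "{a\<in>{..<p}. f a = k0} = {..<p}"
    unfolding N_def by (intro card_subset_eq) auto
  thus ?thesis by blast
qed

lemma PI_sign_const:
  assumes p: "p > 0" and M: "M \<in> PI p" and a: "a < p"
  shows "M a (supp_col p M a) = M 0 (supp_col p M 0)"
  using M perfect_isometry_sign_const[OF p _ _ a] unfolding PI_def by blast

lemma PI_fibres_cong:
  assumes pr: "prime p" and M: "M \<in> PI p" and y: "y < p" and k: "k < p"
  defines "N \<equiv> \<lambda>k. card {a\<in>{..<p}. (supp_col p M a + a * y) mod p = k}"
  shows "int p dvd int (N k) - int (N 0)"
proof -
  have p1: "p > 1" using pr prime_gt_1_nat by blast
  have iso: "isometry p M" and perf: "perfect p M" using M unfolding PI_def by auto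
  define \<epsilon> where "\<epsilon> = M 0 (supp_col p M 0)"
  have \<epsilon>: "\<epsilon> * \<epsilon> = 1" using isometry_row(2)[OF _ iso, of 0] p1 unfolding \<epsilon>_def by auto
  have sign: "\<forall>a<p. M a (supp_col p M a) = \<epsilon>" using PI_sign_const[OF _ M] p1 unfolding \<epsilon>_def by blast
  have "mu p M 1 y = of_int \<epsilon> * (\<Sum>k<p. of_nat (N k) * unity_root p (int k))"
    unfolding N_def by (rule mu_at_one[OF p1 iso sign y])
  also have "\<dots> = (\<Sum>k<p. of_int (\<epsilon> * int (N k)) * unity_root p (int k))"
    by (simp add: sum_distrib_left mult.assoc)
  finally have mu: "mu p M 1 y = (\<Sum>k<p. of_int (\<epsilon> * int (N k)) * unity_root p (int k))" .
  have "in_O p (mu p M 1 y / of_nat p)" using perf p1 y unfolding perfect_def by blast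
  hence "int p dvd \<epsilon> * int (N k) - \<epsilon> * int (N 0)"
    unfolding mu by (rule in_O_imp_coeffs_cong[OF pr _ k])
  hence "int p dvd \<epsilon> * (\<epsilon> * int (N k) - \<epsilon> * int (N 0))" by simp
  also have "\<epsilon> * (\<epsilon> * int (N k) - \<epsilon> * int (N 0)) = (\<epsilon> * \<epsilon>) * (int (N k) - int (N 0))"
    by (simp add: algebra_simps)
  finally show ?thesis using \<epsilon> by simp
qed

text \<open>With y chosen so that \<pi>(0) \<equiv> \<pi>(1) + y, the fibre of a \<mapsto> \<pi>(a) + a y over \<pi>(0)
  contains 0 and 1; by the congruence of the fibre sizes it is everything.\<close>
lemma PI_supp_col_affine:
  assumes pr: "prime p" and M: "M \<in> PI p"
  shows "\<exists>t. 0 < t \<and> t < p \<and> (\<forall>a<p. supp_col p M a = (supp_col p M 0 + t * a) mod p)"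
proof -
  have p1: "p > 1" using pr prime_gt_1_nat by blast
  hence p: "p > 0" by simp
  have iso: "isometry p M" using M unfolding PI_def by auto
  define \<pi> where "\<pi> = supp_col p M"
  have \<pi>p: "\<pi> a < p" if "a < p" for a using isometry_row(1)[OF p iso that] unfolding \<pi>_def .
  have "\<pi> 0 \<noteq> \<pi> 1" using supp_col_inj[OF p iso p p1] unfolding \<pi>_def by auto
  define y where "y = (\<pi> 0 + p - \<pi> 1) mod p"
  have y: "y < p" "y \<noteq> 0" unfolding y_def using p \<pi>p[OF p] \<pi>p[OF p1] \<open>\<pi> 0 \<noteq> \<pi> 1\<close>
    by (cases "\<pi> 1 \<le> \<pi> 0"; auto simp: mod_if le_mod_geq)+
  define f where "f a = (\<pi> a + a * y) mod p" for a
  have f01: "f 0 = \<pi> 0" "f 1 = \<pi> 0"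
    unfolding f_def y_def using \<pi>p[OF p] \<pi>p[OF p1] by (simp_all add: mod_add_right_eq)
  have "card {0::nat, 1} \<le> card {a\<in>{..<p}. f a = \<pi> 0}"
    using f01 p1 by (intro card_mono) auto
  moreover have "int p dvd int (card {a\<in>{..<p}. f a = k}) - int (card {a\<in>{..<p}. f a = \<pi> 0})"
    if "k < p" for k
    using dvd_diff[OF PI_fibres_cong[OF pr M y(1) that] PI_fibres_cong[OF pr M y(1) \<pi>p[OF p]]]
    unfolding f_def \<pi>_def by simp
  ultimately have all: "\<forall>a<p. f a = \<pi> 0"
    using fibres_cong_imp_const[of p f "\<pi> 0"] \<pi>p[OF p] by (simp add: f_def)
  have "\<pi> a = (\<pi> 0 + (p - y) * a) mod p" if a: "a < p" for a
  proof -
    have "\<pi> 0 = (\<pi> a + a * y) mod p" using all a unfolding f_def by simp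
    hence "(\<pi> 0 + (p - y) * a) mod p = (\<pi> a + a * y + (p - y) * a) mod p"
      by (simp add: mod_add_left_eq)
    also have "\<pi> a + a * y + (p - y) * a = \<pi> a + p * a" using y by (simp add: algebra_simps)
    finally show ?thesis using \<pi>p[OF a] by simp
  qed
  moreover have "0 < p - y" "p - y < p" using y by auto
  ultimately show ?thesis unfolding \<pi>_def by blast
qed

definition aff_mat :: "nat \<Rightarrow> int \<Rightarrow> nat \<Rightarrow> nat \<Rightarrow> nat \<Rightarrow> nat \<Rightarrow> int" where
  "aff_mat p \<epsilon> c t = (\<lambda>a b. if a < p \<and> b < p \<and> b = (c + t * a) mod p then \<epsilon> else 0)"

lemma aff_mat_mats: "aff_mat p \<epsilon> c t \<in> mats p"
  unfolding mats_def aff_mat_def by auto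

lemma PI_imp_aff_mat:
  assumes pr: "prime p" and M: "M \<in> PI p"
  shows "\<exists>\<epsilon> c t. (\<epsilon> = 1 \<or> \<epsilon> = -1) \<and> c < p \<and> 0 < t \<and> t < p \<and> M = aff_mat p \<epsilon> c t"
proof -
  have p: "p > 0" using pr prime_gt_0_nat by blast
  have Mm: "M \<in> mats p" and iso: "isometry p M" using M unfolding PI_def by auto
  define \<pi> where "\<pi> = supp_col p M"
  define \<epsilon> where "\<epsilon> = M 0 (\<pi> 0)"
  obtain t where t: "0 < t" "t < p" and \<pi>: "\<forall>a<p. \<pi> a = (\<pi> 0 + t * a) mod p"
    using PI_supp_col_affine[OF pr M] unfolding \<pi>_def by blast
  have "M = aff_mat p \<epsilon> (\<pi> 0) t"
  proof (intro ext)
    fix a b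
    show "M a b = aff_mat p \<epsilon> (\<pi> 0) t a b"
    proof (cases "a < p \<and> b < p")
      case True
      have "M a (\<pi> a) = \<epsilon>"
        using PI_sign_const[OF p M, of a] True unfolding \<pi>_def \<epsilon>_def by simp
      moreover have "b \<noteq> \<pi> a \<Longrightarrow> M a b = 0"
        using isometry_row(3)[OF p iso, of a b] True unfolding \<pi>_def by blast
      moreover have "\<pi> a = (\<pi> 0 + t * a) mod p" using \<pi> True by blast
      ultimately show ?thesis using True unfolding aff_mat_def by auto
    next
      case False
      thus ?thesis using Mm unfolding mats_def aff_mat_def by auto
    qed
  qed
  moreover have "\<epsilon> = 1 \<or> \<epsilon> = -1" "\<pi> 0 < p"
    using isometry_row(1,2)[OF p iso p] unfolding \<epsilon>_def \<pi>_def by auto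
  ultimately show ?thesis using t by blast
qed

section \<open>The affine signed permutations are perfect isometries\<close>

lemma coprime_less_prime:
  fixes p t :: nat
  assumes "prime p" "0 < t" "t < p"
  shows "coprime t p"
proof -
  have "\<not> p dvd t" using assms(2,3) by (auto dest: dvd_imp_le)
  thus ?thesis using assms(1) by (simp add: prime_imp_coprime_nat coprime_commute)
qed

lemma affine_mod_inj:
  fixes p c t a a' :: nat
  assumes pr: "prime p" and t: "0 < t" "t < p" and a: "a < p" "a' < p"
    and eq: "(c + t * a) mod p = (c + t * a') mod p"
  shows "a = a'"
proof -
  have "coprime t p" using pr t by (rule coprime_less_prime)
  moreover have "[c + t * a = c + t * a'] (mod p)" using eq by (simp add: cong_def)
  hence "[t * a = t * a'] (mod p)" by (simp add: cong_add_lcancel_nat)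
  ultimately have "[a = a'] (mod p)" by (simp add: cong_mult_lcancel_nat)
  thus ?thesis using a by (rule cong_less_modulus_unique_nat)
qed

lemma mod_inverse_exists:
  fixes p t :: nat
  assumes pr: "prime p" and t: "0 < t" "t < p"
  shows "\<exists>u. 0 < u \<and> u < p \<and> (t * u) mod p = 1"
proof -
  have "coprime t p" using pr t by (rule coprime_less_prime)
  then obtain x where "[t * x = Suc 0] (mod p)" using cong_solve_coprime_nat by blast
  hence u: "(t * (x mod p)) mod p = 1"
    using prime_gt_1_nat[OF pr] by (simp add: cong_def mod_mult_right_eq)
  moreover have "x mod p \<noteq> 0" using u by (intro notI) simp
  ultimately show ?thesis using pr prime_gt_0_nat by auto
qed

lemma mcomp_aff_mat:
  assumes p: "p > 0"
  shows "mcomp p (aff_mat p \<epsilon> c t) (aff_mat p \<epsilon>' c' t')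
       = aff_mat p (\<epsilon> * \<epsilon>') ((c + t * c') mod p) ((t * t') mod p)"
proof (intro ext)
  fix a e
  show "mcomp p (aff_mat p \<epsilon> c t) (aff_mat p \<epsilon>' c' t') a e
      = aff_mat p (\<epsilon> * \<epsilon>') ((c + t * c') mod p) ((t * t') mod p) a e"
  proof (cases "a < p \<and> e < p")
    case True
    define b where "b = (c' + t' * a) mod p"
    have b: "b < p" unfolding b_def using p by simp
    have "(c + t * b) mod p = (c + t * (c' + t' * a)) mod p"
      unfolding b_def by (metis mod_add_right_eq mod_mult_right_eq)
    also have "\<dots> = ((c + t * c') + (t * t') * a) mod p" by (simp add: algebra_simps)
    also have "\<dots> = ((c + t * c') mod p + (t * t') mod p * a) mod p"
      by (metis mod_add_left_eq mod_add_right_eq mod_mult_left_eq)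
    finally have cb: "(c + t * b) mod p = ((c + t * c') mod p + (t * t') mod p * a) mod p" .
    have "mcomp p (aff_mat p \<epsilon> c t) (aff_mat p \<epsilon>' c' t') a e
        = (\<Sum>b'<p. aff_mat p \<epsilon>' c' t' a b' * aff_mat p \<epsilon> c t b' e)"
      unfolding mcomp_def using True by simp
    also have "\<dots> = (\<Sum>b'<p. if b' = b then \<epsilon>' * aff_mat p \<epsilon> c t b e else 0)"
      using True by (intro sum.cong refl) (auto simp: aff_mat_def b_def)
    also have "\<dots> = \<epsilon>' * aff_mat p \<epsilon> c t b e" using b by simp
    also have "\<dots> = aff_mat p (\<epsilon> * \<epsilon>') ((c + t * c') mod p) ((t * t') mod p) a e"
      unfolding aff_mat_def using True b cb by auto
    finally show ?thesis .
  next
    case False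
    thus ?thesis unfolding mcomp_def aff_mat_def by auto
  qed
qed

lemma aff_mat_id: "aff_mat p 1 0 1 = idmat p"
  unfolding aff_mat_def idmat_def by (intro ext) auto

lemma lmap_Zsupp: "lmap p M c \<in> Zsupp p"
  unfolding lmap_def Zsupp_def by auto

lemma lmap_idmat: "c \<in> Zsupp p \<Longrightarrow> lmap p (idmat p) c = c"
proof (intro ext)
  fix b assume c: "c \<in> Zsupp p"
  show "lmap p (idmat p) c b = c b"
  proof (cases "b < p")
    case True
    have "(\<Sum>a<p. c a * idmat p a b) = (\<Sum>a<p. if a = b then c b else 0)"
      using True by (intro sum.cong refl) (auto simp: idmat_def)
    thus ?thesis using True unfolding lmap_def by simp
  next
    case False thus ?thesis using c unfolding lmap_def Zsupp_def by auto
  qed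
qed

lemma lmap_mcomp: "lmap p I (lmap p J c) = lmap p (mcomp p I J) c"
proof (intro ext)
  fix b
  show "lmap p I (lmap p J c) b = lmap p (mcomp p I J) c b"
  proof (cases "b < p")
    case True
    have "(\<Sum>a<p. lmap p J c a * I a b) = (\<Sum>a<p. \<Sum>a'<p. c a' * (J a' a * I a b))"
      unfolding lmap_def by (intro sum.cong refl) (simp add: sum_distrib_right mult.assoc)
    also have "\<dots> = (\<Sum>a'<p. \<Sum>a<p. c a' * (J a' a * I a b))" by (rule sum.swap)
    also have "\<dots> = (\<Sum>a'<p. c a' * mcomp p I J a' b)"
      unfolding mcomp_def using True by (intro sum.cong refl) (simp add: sum_distrib_left)
    finally show ?thesis unfolding lmap_def using True by simp
  next
    case False thus ?thesis unfolding lmap_def by simp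
  qed
qed

lemma aff_mat_bij:
  assumes pr: "prime p" and \<epsilon>: "\<epsilon> = 1 \<or> \<epsilon> = -1" and c: "c < p" and t: "0 < t" "t < p"
  shows "bij_betw (lmap p (aff_mat p \<epsilon> c t)) (Zsupp p) (Zsupp p)"
proof -
  have p: "p > 0" using pr prime_gt_0_nat by blast
  obtain u where u: "0 < u" "u < p" "(t * u) mod p = 1" using mod_inverse_exists[OF pr t] by blast
  \<comment> \<open>the inverse of a \<mapsto> c + t a is a \<mapsto> u (a - c)\<close>
  define N where "N = aff_mat p \<epsilon> ((u * (p - c)) mod p) u"
  have "\<epsilon> * \<epsilon> = 1" using \<epsilon> by auto
  moreover have "(c + t * ((u * (p - c)) mod p)) mod p = 0"
  proof -
    have "(c + t * ((u * (p - c)) mod p)) mod p = (c + (t * u) * (p - c)) mod p"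
      by (metis mod_add_right_eq mod_mult_right_eq mult.assoc)
    also have "\<dots> = (c + ((t * u) mod p) * (p - c)) mod p"
      by (metis mod_add_right_eq mod_mult_left_eq)
    finally show ?thesis using u c by simp
  qed
  moreover have "((u * (p - c)) mod p + u * c) mod p = 0"
    using c by (simp add: mod_add_left_eq flip: add_mult_distrib2)
  ultimately have "mcomp p (aff_mat p \<epsilon> c t) N = idmat p" "mcomp p N (aff_mat p \<epsilon> c t) = idmat p"
    unfolding N_def mcomp_aff_mat[OF p] aff_mat_id[symmetric] using u(3) by (simp_all add: mult.commute)
  thus ?thesis
    by (intro bij_betw_byWitness[where f' = "lmap p N"]) (auto simp: lmap_mcomp lmap_idmat lmap_Zsupp)
qed

lemma aff_mat_isometry:
  assumes pr: "prime p" and \<epsilon>: "\<epsilon> = 1 \<or> \<epsilon> = -1" and t: "0 < t" "t < p"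
  shows "isometry p (aff_mat p \<epsilon> c t)"
proof -
  have p: "p > 0" using pr prime_gt_0_nat by blast
  show ?thesis
  proof (rule gram_isometry[OF p], intro allI impI)
    fix a a' assume a: "a < p" and a': "a' < p"
    define b where "b = (c + t * a) mod p"
    have "gram p (aff_mat p \<epsilon> c t) a a'
        = (\<Sum>b'<p. if b' = b then (if b = (c + t * a') mod p then \<epsilon> * \<epsilon> else 0) else 0)"
      unfolding gram_def aff_mat_def b_def using a a' by (intro sum.cong refl) auto
    also have "\<dots> = (if b = (c + t * a') mod p then \<epsilon> * \<epsilon> else 0)"
      using p by (simp add: b_def)
    also have "\<dots> = (if a = a' then 1 else 0)"
      using affine_mod_inj[OF pr t a a'] \<epsilon> unfolding b_def by auto
    finally show "gram p (aff_mat p \<epsilon> c t) a a' = (if a = a' then 1 else 0)" .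
  qed
qed

lemma img_aff_mat:
  assumes p: "p > 0" and a: "a < p"
  shows "img p (aff_mat p \<epsilon> c t) a = (\<lambda>x. of_int \<epsilon> * chi p ((c + t * a) mod p) x)"
proof
  fix x
  show "img p (aff_mat p \<epsilon> c t) a x = of_int \<epsilon> * chi p ((c + t * a) mod p) x"
    unfolding img_def
    by (subst vchar_single[of "(c + t * a) mod p"]) (use p a in \<open>auto simp: aff_mat_def\<close>)
qed

lemma mu_aff_mat:
  assumes p: "p > 0" and x: "x < p" and y: "y < p"
  shows "mu p (aff_mat p \<epsilon> c t) x y
       = (if int p dvd (int t * int x + int y) then of_int \<epsilon> * unity_root p (int c * int x) * of_nat p else 0)"
proof -
  have "mu p (aff_mat p \<epsilon> c t) x y
      = (\<Sum>a<p. of_int \<epsilon> * unity_root p (int c * int x) * unity_root p ((int t * int x + int y) * int a))"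
    unfolding mu_def
  proof (intro sum.cong refl)
    fix a assume "a \<in> {..<p}"
    hence a: "a < p" by simp
    have "chi p ((c + t * a) mod p) x = unity_root p (int (c + t * a) * int x)"
      using x by (simp add: chi_eq_unity_root) (rule unity_root_cong[OF p], simp add: zmod_int mod_mult_left_eq)
    hence "chi p ((c + t * a) mod p) x * chi p a y
        = unity_root p (int c * int x + (int t * int x + int y) * int a)"
      using y by (simp add: chi_eq_unity_root unity_root_add[symmetric] algebra_simps)
    thus "img p (aff_mat p \<epsilon> c t) a x * chi p a y
        = of_int \<epsilon> * unity_root p (int c * int x) * unity_root p ((int t * int x + int y) * int a)"
      unfolding img_aff_mat[OF p a] by (simp add: unity_root_add)
  qed
  also have "\<dots> = of_int \<epsilon> * unity_root p (int c * int x) * (\<Sum>a<p. unity_root p ((int t * int x + int y) * int a))"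
    by (simp add: sum_distrib_left)
  finally show ?thesis by (simp add: sum_unity_root[OF p])
qed

lemma unity_root_in_Zzeta:
  assumes p: "p > 0"
  shows "of_int e * unity_root p k \<in> Zzeta p"
proof -
  define j where "j = nat (k mod int p)"
  have j: "j < p" "unity_root p k = zeta p ^ j"
    unfolding j_def using p by (simp_all add: nat_less_iff zeta_power unity_root_mod)
  have "(\<Sum>i<p. of_int (if i = j then e else 0) * zeta p ^ i)
      = (\<Sum>i<p. if i = j then of_int e * zeta p ^ j else 0)"
    by (intro sum.cong refl) auto
  also have "\<dots> = of_int e * unity_root p k" using j by simp
  finally show ?thesis unfolding Zzeta_def by (intro CollectI exI) (rule sym)
qed

lemma aff_mat_perfect:
  assumes pr: "prime p" and t: "0 < t" "t < p"
  shows "perfect p (aff_mat p \<epsilon> c t)"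
proof -
  have p: "p > 0" using pr prime_gt_0_nat by blast
  have "in_O p (mu p (aff_mat p \<epsilon> c t) x y / of_nat p)" if x: "x < p" and y: "y < p" for x y
  proof -
    have "0 \<in> Zzeta p" unfolding Zzeta_def by (intro CollectI exI[of _ "\<lambda>_. 0"]) simp
    hence "of_int 1 * (mu p (aff_mat p \<epsilon> c t) x y / of_nat p) \<in> Zzeta p"
      using p by (simp add: mu_aff_mat[OF p x y] unity_root_in_Zzeta)
    thus ?thesis unfolding in_O_def by (intro exI[of _ 1]) simp
  qed
  moreover have "x = 0 \<longleftrightarrow> y = 0"
    if x: "x < p" and y: "y < p" and nz: "mu p (aff_mat p \<epsilon> c t) x y \<noteq> 0" for x y
  proof -
    have d: "int p dvd int t * int x + int y" using nz mu_aff_mat[OF p x y] by (auto split: if_splits)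
    show ?thesis
    proof
      assume "x = 0"
      hence "p dvd y" using d by simp
      thus "y = 0" using y by (auto dest: dvd_imp_le)
    next
      assume "y = 0"
      hence "p dvd t * x" using d by (simp flip: of_nat_mult)
      hence "p dvd x" using coprime_less_prime[OF pr t] by (simp add: coprime_commute coprime_dvd_mult_right_iff)
      thus "x = 0" using x by (auto dest: dvd_imp_le)
    qed
  qed
  ultimately show ?thesis unfolding perfect_def by blast
qed

theorem PI_eq_aff_mats:
  assumes pr: "prime p"
  shows "M \<in> PI p \<longleftrightarrow> (\<exists>\<epsilon> c t. (\<epsilon> = 1 \<or> \<epsilon> = -1) \<and> c < p \<and> 0 < t \<and> t < p \<and> M = aff_mat p \<epsilon> c t)"
proof
  assume "M \<in> PI p"
  thus "\<exists>\<epsilon> c t. (\<epsilon> = 1 \<or> \<epsilon> = -1) \<and> c < p \<and> 0 < t \<and> t < p \<and> M = aff_mat p \<epsilon> c t"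
    by (rule PI_imp_aff_mat[OF pr])
next
  assume "\<exists>\<epsilon> c t. (\<epsilon> = 1 \<or> \<epsilon> = -1) \<and> c < p \<and> 0 < t \<and> t < p \<and> M = aff_mat p \<epsilon> c t"
  then obtain \<epsilon> c t where \<epsilon>: "\<epsilon> = 1 \<or> \<epsilon> = -1" and c: "c < p" and t: "0 < t" "t < p"
    and M: "M = aff_mat p \<epsilon> c t"
    by blast
  show "M \<in> PI p"
    unfolding PI_def M
    using aff_mat_mats aff_mat_bij[OF pr \<epsilon> c t] aff_mat_isometry[OF pr \<epsilon> t] aff_mat_perfect[OF pr t]
    by simp
qed

section \<open>Automorphisms and the isometries I_\<lambda>, I_\<sigma>\<close>

definition mult_aut :: "nat \<Rightarrow> nat \<Rightarrow> nat \<Rightarrow> nat" where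
  "mult_aut p u = (\<lambda>x. if x < p then (u * x) mod p else x)"

lemma mult_aut_inj:
  assumes pr: "prime p" and u: "0 < u" "u < p"
  shows "inj_on (mult_aut p u) {..<p}"
proof (rule inj_onI)
  fix x y assume "x \<in> {..<p}" "y \<in> {..<p}" "mult_aut p u x = mult_aut p u y"
  thus "x = y" using affine_mod_inj[OF pr u, of x y 0] unfolding mult_aut_def by simp
qed

lemma mult_aut_bij:
  assumes pr: "prime p" and u: "0 < u" "u < p"
  shows "bij_betw (mult_aut p u) {..<p} {..<p}"
proof -
  have "mult_aut p u ` {..<p} \<subseteq> {..<p}" unfolding mult_aut_def by auto
  hence "mult_aut p u ` {..<p} = {..<p}" using endo_inj_surj mult_aut_inj[OF pr u] by blast
  thus ?thesis using mult_aut_inj[OF pr u] unfolding bij_betw_def by blast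
qed

lemma mult_aut_Aut:
  assumes pr: "prime p" and u: "0 < u" "u < p"
  shows "mult_aut p u \<in> Aut p"
proof -
  have p: "p > 0" using pr prime_gt_0_nat by blast
  have "mult_aut p u ((x + y) mod p) = (mult_aut p u x + mult_aut p u y) mod p"
    if "x < p" "y < p" for x y
    using p that unfolding mult_aut_def by (simp add: mod_mult_right_eq distrib_left mod_add_eq)
  thus ?thesis unfolding Aut_def using mult_aut_bij[OF pr u] by (auto simp: mult_aut_def)
qed

lemma Aut_eq_mult_aut:
  assumes pr: "prime p" and \<sigma>: "\<sigma> \<in> Aut p"
  shows "0 < \<sigma> 1" "\<sigma> 1 < p" "\<sigma> = mult_aut p (\<sigma> 1)"
proof -
  have p1: "p > 1" using pr prime_gt_1_nat by blast
  have bij: "bij_betw \<sigma> {..<p} {..<p}"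
    and add: "\<And>x y. x < p \<Longrightarrow> y < p \<Longrightarrow> \<sigma> ((x + y) mod p) = (\<sigma> x + \<sigma> y) mod p"
    and fix_out: "\<And>x. p \<le> x \<Longrightarrow> \<sigma> x = x"
    using \<sigma> unfolding Aut_def by auto
  have lt: "\<sigma> x < p" if "x < p" for x using bij that unfolding bij_betw_def by auto
  have "\<sigma> 0 = (\<sigma> 0 + \<sigma> 0) mod p" using add[of 0 0] p1 by simp
  hence \<sigma>0: "\<sigma> 0 = 0" using lt[of 0] p1 by (cases "\<sigma> 0 + \<sigma> 0 < p") (auto simp: le_mod_geq)
  have lin: "\<sigma> x = (\<sigma> 1 * x) mod p" if "x < p" for x
    using that
  proof (induction x)
    case 0 thus ?case using \<sigma>0 by simp
  next
    case (Suc x)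
    have "\<sigma> (Suc x) = (\<sigma> x + \<sigma> 1) mod p" using add[of x 1] Suc.prems p1 by simp
    also have "\<dots> = (\<sigma> 1 * x + \<sigma> 1) mod p" using Suc by (simp add: mod_add_left_eq)
    finally show ?case by (simp add: add.commute)
  qed
  show "\<sigma> 1 < p" using lt p1 by simp
  have inj: "inj_on \<sigma> {..<p}" using bij unfolding bij_betw_def by blast
  show "0 < \<sigma> 1"
  proof (rule ccontr)
    assume "\<not> 0 < \<sigma> 1"
    hence "\<sigma> 1 = \<sigma> 0" using \<sigma>0 by simp
    thus False using inj_onD[OF inj] p1 by fastforce
  qed
  show "\<sigma> = mult_aut p (\<sigma> 1)"
    using lin fix_out unfolding mult_aut_def by (auto simp: not_less)
qed

lemma Aut_comp:
  assumes pr: "prime p" and \<sigma>: "\<sigma> \<in> Aut p" and \<sigma>': "\<sigma>' \<in> Aut p"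
  shows "\<sigma> \<circ> \<sigma>' \<in> Aut p" "(\<sigma> \<circ> \<sigma>') 1 = (\<sigma> 1 * \<sigma>' 1) mod p"
proof -
  have p1: "p > 1" using pr prime_gt_1_nat by blast
  note A = Aut_eq_mult_aut[OF pr \<sigma>] and A' = Aut_eq_mult_aut[OF pr \<sigma>']
  define v where "v = (\<sigma> 1 * \<sigma>' 1) mod p"
  have "\<not> p dvd \<sigma> 1 * \<sigma>' 1"
    using A(1,2) A'(1,2) pr by (auto simp: prime_dvd_mult_iff dest: dvd_imp_le)
  hence v: "0 < v" "v < p" unfolding v_def using p1 by (auto simp: dvd_eq_mod_eq_0)
  have "\<sigma> \<circ> \<sigma>' = mult_aut p v"
  proof
    fix x
    have "(\<sigma> \<circ> \<sigma>') x = mult_aut p (\<sigma> 1) (mult_aut p (\<sigma>' 1) x)"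
      by (metis A(3) A'(3) comp_apply)
    thus "(\<sigma> \<circ> \<sigma>') x = mult_aut p v x"
      unfolding v_def mult_aut_def using p1 by (simp add: mod_mult_right_eq mod_mult_left_eq mult.assoc)
  qed
  thus "\<sigma> \<circ> \<sigma>' \<in> Aut p" "(\<sigma> \<circ> \<sigma>') 1 = (\<sigma> 1 * \<sigma>' 1) mod p"
    using mult_aut_Aut[OF pr v] p1 unfolding v_def by (simp_all add: mult_aut_def)
qed

lemma I_lam_chi:
  assumes pr: "prime p" and c: "c < p"
  shows "I_lam p (chi p c) = aff_mat p 1 c 1"
proof -
  have p: "p > 0" using pr prime_gt_0_nat by blast
  show ?thesis unfolding I_lam_def
  proof (rule mat_of_unique[OF p aff_mat_mats], intro allI impI)
    fix a assume a: "a < p"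
    show "vchar p (aff_mat p 1 c 1 a) = (\<lambda>x. chi p c x * chi p a x)"
      using img_aff_mat[OF p a, of 1 c 1] unfolding img_def by (simp add: chi_add[OF p])
  qed
qed

text \<open>\<chi>_a^\<sigma> for \<sigma>(h) = u h is \<chi>_(ta) with t = u^(-1).\<close>
lemma I_sig_mult_aut:
  assumes pr: "prime p" and u: "0 < u" "u < p" and t: "t < p" and ut: "(u * t) mod p = 1"
  shows "I_sig p (mult_aut p u) = aff_mat p 1 0 t"
proof -
  have p: "p > 0" using pr prime_gt_0_nat by blast
  have inv: "inv_into {..<p} (mult_aut p u) h = (t * h) mod p" if h: "h < p" for h
  proof (rule inv_into_f_eq[OF mult_aut_inj[OF pr u]])
    show "(t * h) mod p \<in> {..<p}" using p by simp
    have "mult_aut p u ((t * h) mod p) = ((u * t) * h) mod p"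
      unfolding mult_aut_def using p by (simp add: mod_mult_right_eq mult.assoc)
    also have "\<dots> = h" using ut h by (metis mod_mult_left_eq mult_1 mod_less)
    finally show "mult_aut p u ((t * h) mod p) = h" .
  qed
  show ?thesis unfolding I_sig_def
  proof (rule mat_of_unique[OF p aff_mat_mats], intro allI impI)
    fix a assume a: "a < p"
    show "vchar p (aff_mat p 1 0 t a) = chi_act p (mult_aut p u) (chi p a)"
    proof
      fix x
      have "vchar p (aff_mat p 1 0 t a) x = chi p ((t * a) mod p) x"
        using img_aff_mat[OF p a, of 1 0 t] unfolding img_def by simp
      also have "\<dots> = chi_act p (mult_aut p u) (chi p a) x"
      proof (cases "x < p")
        case True
        have "chi p ((t * a) mod p) x = unity_root p (int ((t * a) mod p) * int x)"
          using True by (simp add: chi_eq_unity_root)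
        also have "\<dots> = unity_root p (int a * int ((t * x) mod p))"
          by (rule unity_root_cong[OF p]) (simp add: zmod_int mod_mult_left_eq mod_mult_right_eq ac_simps)
        also have "\<dots> = chi p a ((t * x) mod p)" using p by (simp add: chi_eq_unity_root)
        finally show ?thesis unfolding chi_act_def using True inv by simp
      qed (simp add: chi_act_def chi_def)
      finally show "vchar p (aff_mat p 1 0 t a) x = chi_act p (mult_aut p u) (chi p a) x" .
    qed
  qed
qed

section \<open>The group structure\<close>

lemma aff_mat_param_inj:
  assumes pr: "prime p" and c: "c < p" "c' < p" and t: "0 < t" "t < p" "0 < t'" "t' < p"
    and \<epsilon>: "\<epsilon> \<noteq> 0" and eq: "aff_mat p \<epsilon> c t = aff_mat p \<epsilon>' c' t'"
  shows "\<epsilon> = \<epsilon>' \<and> c = c' \<and> t = t'"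
proof -
  have p1: "p > 1" using pr prime_gt_1_nat by blast
  have "aff_mat p \<epsilon>' c' t' 0 c = \<epsilon>" using c p1 eq[symmetric] by (simp add: aff_mat_def)
  hence cc: "c = c'" and ee: "\<epsilon> = \<epsilon>'" using \<epsilon> c p1 unfolding aff_mat_def by (auto split: if_splits)
  have "aff_mat p \<epsilon>' c' t' 1 ((c + t) mod p) = \<epsilon>" using p1 eq[symmetric] by (simp add: aff_mat_def)
  hence "(c + 1 * t) mod p = (c + 1 * t') mod p" using \<epsilon> cc unfolding aff_mat_def by (auto split: if_splits)
  hence "t = t'" using affine_mod_inj[OF pr _ _ t(2,4), of 1 c] p1 by simp
  thus ?thesis using cc ee by simp
qed

definition PI_param :: "nat \<Rightarrow> (nat \<times> (nat \<Rightarrow> nat)) \<times> int \<Rightarrow> nat \<Rightarrow> nat \<Rightarrow> int" where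
  "PI_param p = (\<lambda>((h, \<sigma>), \<epsilon>). aff_mat p \<epsilon> h (\<sigma> 1))"

lemma carrier_sdp_C2: "carrier (sdp p \<times>\<times> C2) = ({..<p} \<times> Aut p) \<times> {1, -1}"
  unfolding DirProd_def sdp_def C2_def by simp

lemma PI_param_inj: "prime p \<Longrightarrow> inj_on (PI_param p) (carrier (sdp p \<times>\<times> C2))"
proof (rule inj_onI)
  fix x y assume pr: "prime p" and "x \<in> carrier (sdp p \<times>\<times> C2)" "y \<in> carrier (sdp p \<times>\<times> C2)"
    and eq: "PI_param p x = PI_param p y"
  then obtain h \<sigma> e h' \<sigma>' e' where x: "x = ((h, \<sigma>), e)" "h < p" "\<sigma> \<in> Aut p" "e = 1 \<or> e = -1"
    and y: "y = ((h', \<sigma>'), e')" "h' < p" "\<sigma>' \<in> Aut p" "e' = 1 \<or> e' = -1"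
    unfolding carrier_sdp_C2 by auto
  have "e = e' \<and> h = h' \<and> \<sigma> 1 = \<sigma>' 1"
    using eq unfolding x y PI_param_def
    by (intro aff_mat_param_inj[OF pr]) (use x y Aut_eq_mult_aut[OF pr] in auto)
  moreover have "\<sigma> = \<sigma>'"
    using calculation Aut_eq_mult_aut(3)[OF pr x(3)] Aut_eq_mult_aut(3)[OF pr y(3)] by metis
  ultimately show "x = y" using x y by simp
qed

lemma PI_param_image:
  assumes pr: "prime p"
  shows "PI_param p ` carrier (sdp p \<times>\<times> C2) = PI p"
proof
  show "PI_param p ` carrier (sdp p \<times>\<times> C2) \<subseteq> PI p"
  proof (rule image_subsetI)
    fix x assume "x \<in> carrier (sdp p \<times>\<times> C2)"
    then obtain h \<sigma> e where "x = ((h, \<sigma>), e)" "h < p" "\<sigma> \<in> Aut p" "e = 1 \<or> e = -1"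
      unfolding carrier_sdp_C2 by auto
    moreover from this(3) have "0 < \<sigma> 1" "\<sigma> 1 < p" by (rule Aut_eq_mult_aut[OF pr])+
    ultimately show "PI_param p x \<in> PI p"
      unfolding PI_eq_aff_mats[OF pr] PI_param_def
      by (intro exI[of _ e] exI[of _ h] exI[of _ "\<sigma> 1"]) auto
  qed
  show "PI p \<subseteq> PI_param p ` carrier (sdp p \<times>\<times> C2)"
  proof
    fix M assume "M \<in> PI p"
    then obtain e c t where h: "e = 1 \<or> e = -1" "c < p" "0 < t" "t < p" "M = aff_mat p e c t"
      unfolding PI_eq_aff_mats[OF pr] by blast
    have "M = PI_param p ((c, mult_aut p t), e)"
      unfolding PI_param_def h(5) mult_aut_def using prime_gt_1_nat[OF pr] h by simp
    moreover have "((c, mult_aut p t), e) \<in> carrier (sdp p \<times>\<times> C2)"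
      unfolding carrier_sdp_C2 using h mult_aut_Aut[OF pr h(3,4)] by auto
    ultimately show "M \<in> PI_param p ` carrier (sdp p \<times>\<times> C2)" by blast
  qed
qed

lemma PI_param_mult:
  assumes pr: "prime p" and x: "x \<in> carrier (sdp p \<times>\<times> C2)" and y: "y \<in> carrier (sdp p \<times>\<times> C2)"
  shows "PI_param p (x \<otimes>\<^bsub>sdp p \<times>\<times> C2\<^esub> y) = mcomp p (PI_param p x) (PI_param p y)"
proof -
  have p: "p > 0" using pr prime_gt_0_nat by blast
  obtain h \<sigma> e where xx: "x = ((h, \<sigma>), e)" and \<sigma>: "\<sigma> \<in> Aut p"
    using x unfolding carrier_sdp_C2 by auto
  obtain h' \<sigma>' e' where yy: "y = ((h', \<sigma>'), e')" and h': "h' < p" and \<sigma>': "\<sigma>' \<in> Aut p"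
    using y unfolding carrier_sdp_C2 by auto
  have "\<sigma> h' = (\<sigma> 1 * h') mod p"
    using h' by (subst Aut_eq_mult_aut(3)[OF pr \<sigma>]) (simp add: mult_aut_def)
  hence "(h + \<sigma> h') mod p = (h + \<sigma> 1 * h') mod p" by (simp add: mod_add_right_eq)
  thus ?thesis
    unfolding xx yy PI_param_def using Aut_comp(2)[OF pr \<sigma> \<sigma>']
    by (simp add: DirProd_def sdp_def C2_def mcomp_aff_mat[OF p])
qed

lemma PI_group_iso:
  assumes pr: "prime p"
  shows "PI_group p \<cong> sdp p \<times>\<times> C2"
proof -
  let ?A = "carrier (sdp p \<times>\<times> C2)"
  have bij: "bij_betw (PI_param p) ?A (PI p)"
    using PI_param_inj[OF pr] PI_param_image[OF pr] unfolding bij_betw_def by blast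
  have closed: "x \<otimes>\<^bsub>sdp p \<times>\<times> C2\<^esub> y \<in> ?A" if "x \<in> ?A" "y \<in> ?A" for x y
    using that Aut_comp(1)[OF pr] prime_gt_0_nat[OF pr]
    unfolding carrier_sdp_C2 by (auto simp: DirProd_def sdp_def C2_def)
  have "inv_into ?A (PI_param p) \<in> iso (PI_group p) (sdp p \<times>\<times> C2)"
  proof (rule isoI)
    show "inv_into ?A (PI_param p) \<in> hom (PI_group p) (sdp p \<times>\<times> C2)"
    proof (rule homI)
      show "inv_into ?A (PI_param p) X \<in> ?A" if "X \<in> carrier (PI_group p)" for X
        using that bij unfolding PI_group_def by (auto simp: bij_betw_def inv_into_into)
      fix X Y assume "X \<in> carrier (PI_group p)" "Y \<in> carrier (PI_group p)"
      hence "X \<in> PI_param p ` ?A" "Y \<in> PI_param p ` ?A"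
        using bij unfolding PI_group_def bij_betw_def by auto
      then obtain x y where xy: "x \<in> ?A" "y \<in> ?A" "X = PI_param p x" "Y = PI_param p y"
        by blast
      have inj: "inj_on (PI_param p) ?A" using bij unfolding bij_betw_def by blast
      have "X \<otimes>\<^bsub>PI_group p\<^esub> Y = PI_param p (x \<otimes>\<^bsub>sdp p \<times>\<times> C2\<^esub> y)"
        using PI_param_mult[OF pr xy(1,2)] xy(3,4) unfolding PI_group_def by simp
      thus "inv_into ?A (PI_param p) (X \<otimes>\<^bsub>PI_group p\<^esub> Y)
          = inv_into ?A (PI_param p) X \<otimes>\<^bsub>sdp p \<times>\<times> C2\<^esub> inv_into ?A (PI_param p) Y"
        using inv_into_f_f[OF inj xy(1)] inv_into_f_f[OF inj xy(2)]
          inv_into_f_f[OF inj closed[OF xy(1,2)]] xy(3,4) by simp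
    qed
    show "bij_betw (inv_into ?A (PI_param p)) (carrier (PI_group p)) ?A"
      using bij_betw_inv_into[OF bij] unfolding PI_group_def by simp
  qed
  thus ?thesis unfolding is_iso_def by blast
qed

section \<open>Sign homogeneity and generators\<close>

lemma PI_sign_homogeneous:
  assumes pr: "prime p" and I: "I \<in> PI p"
  shows "(\<forall>a<p. img p I a \<in> Irr p) \<or> (\<forall>a<p. - img p I a \<in> Irr p)"
proof -
  have p: "p > 0" using pr prime_gt_0_nat by blast
  obtain e c t where e: "e = 1 \<or> e = -1" and I_eq: "I = aff_mat p e c t"
    using I unfolding PI_eq_aff_mats[OF pr] by blast
  have "chi p ((c + t * a) mod p) \<in> Irr p" for a unfolding Irr_def using p by simp
  thus ?thesis using e img_aff_mat[OF p] unfolding I_eq by (auto simp: fun_Compl_def)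
qed

lemma PI_positive_decomposition:
  assumes pr: "prime p" and I: "I \<in> PI p" and pos: "\<forall>a<p. img p I a \<in> Irr p"
  shows "\<exists>fs. set fs \<subseteq> I_lam p ` Irr p \<union> I_sig p ` Aut p \<and> I = foldr (mcomp p) fs (idmat p)"
proof -
  have p: "p > 0" using pr prime_gt_0_nat by blast
  obtain e c t where e: "e = 1 \<or> e = -1" and c: "c < p" and t: "0 < t" "t < p"
    and I_eq: "I = aff_mat p e c t"
    using I unfolding PI_eq_aff_mats[OF pr] by blast
  obtain k where "img p I 0 = chi p k" using pos p unfolding Irr_def by auto
  hence "of_int e = (1 :: complex)" using p img_aff_mat[OF p p] unfolding I_eq by (metis chi_at_0 mult_1_right)
  hence e1: "e = 1" by simp
  obtain u where u: "0 < u" "u < p" "(t * u) mod p = 1" using mod_inverse_exists[OF pr t] by blast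
  have "I_sig p (mult_aut p u) = aff_mat p 1 0 t"
    using u by (intro I_sig_mult_aut[OF pr _ _ t(2)]) (simp_all add: mult.commute)
  hence "foldr (mcomp p) [I_lam p (chi p c), I_sig p (mult_aut p u)] (idmat p) = I"
    unfolding I_eq e1 I_lam_chi[OF pr c] aff_mat_id[symmetric] using c t by (simp add: mcomp_aff_mat[OF p])
  moreover have "set [I_lam p (chi p c), I_sig p (mult_aut p u)] \<subseteq> I_lam p ` Irr p \<union> I_sig p ` Aut p"
    unfolding Irr_def using c mult_aut_Aut[OF pr u(1,2)] by auto
  ultimately show ?thesis by metis
qed

theorem mainTheorem4:
  fixes p :: nat
  assumes "prime p"
  shows "(\<forall>I\<in>PI p. (\<forall>a<p. img p I a \<in> Irr p) \<or> (\<forall>a<p. - img p I a \<in> Irr p))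
       \<and> (\<forall>I\<in>PI p. (\<forall>a<p. img p I a \<in> Irr p) \<longrightarrow>
            (\<exists>fs. set fs \<subseteq> I_lam p ` Irr p \<union> I_sig p ` Aut p \<and>
                  I = foldr (mcomp p) fs (idmat p)))
       \<and> PI_group p \<cong> sdp p \<times>\<times> C2"
  using PI_sign_homogeneous[OF assms] PI_positive_decomposition[OF assms] PI_group_iso[OF assms]
  by blast

end
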